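(* Let $\Lambda=\{z\in\mathbb C:\operatorname{Im}z>0\}$ with measure $d\mu(z)=\frac{da\,db}{4b^2}$ ($z=a+ib$), let $K(\tau;z,x)=\left(\frac{2i(x-z)(x-\overline z)}{z-\overline z}\right)^{\tau}$ for $\tau\in\mathbb C$, $x\in\mathbb R$ (positive base, principal power), and for $f\in C_c^\infty(\Lambda)$ let $Jf(\tau;x)=\int_\Lambda K(\tau;z,x)f(z)\,d\mu(z)$. For a function $\Phi$ on $\mathbb C\times\mathbb R$ and $r\in\mathbb Z$ let $T_+^r\Phi(\tau;x)=\Phi(\tau+r;x)$. Let $\Omega_n=\{(p,q)\in\mathbb Z^2:0\le p,q\le n,\ (p,q)\ne(n,n)\}$, let $\mathcal A$ be the sum over $n\ge0$ of the complex linear spans of $\frac{z^p\overline z^{\,q}}{(z-\overline z)^n}$, $(p,q)\in\Omega_n$, and let $\mathcal B$ be the space of differential operators on $\Lambda$ which are finite sums $$\sum V_{\alpha,\beta,\gamma,\alpha',\beta',\gamma'}(z,\overline z)\Bigl(z^2\tfrac{\partial}{\partial z}\Bigr)^{\alpha}\Bigl(z\tfrac{\partial}{\partial z}\Bigr)^{\beta}\Bigl(\tfrac{\partial}{\partial z}\Bigr)^{\gamma}\Bigl(\overline z^{\,2}\tfrac{\partial}{\partial \overline z}\Bigr)^{\alpha'}\Bigl(\overline z\tfrac{\partial}{\partial \overline z}\Bigr)^{\beta'}\Bigl(\tfrac{\partial}{\partial \overline z}\Bigr)^{\gamma'}$$ with $V_{\alpha,\beta,\gamma,\alpha',\beta',\gamma'}\in\mathcal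 A$. Then for every $D\in\mathcal B$ there is an operator of the form $$D'=\sum_{p\ge0,\ q\ge0,\ r\in\mathbb Z}U_{p,q,r}(\tau)\,x^p\frac{\partial^q}{\partial x^q}T_+^r \quad(\text{finite sum}),$$ where the $U_{p,q,r}$ are rational functions of $\tau$ whose only possible poles lie in $\frac12\mathbb Z$, such that $J(Df)(\tau;x)=(D'Jf)(\tau;x)$ for all $f\in C_c^\infty(\Lambda)$, $x\in\mathbb R$ and all $\tau$ that are not poles of the $U_{p,q,r}$.
   Context: $\frac{\partial}{\partial z}$, $\frac{\partial}{\partial\overline z}$ are the Wirtinger derivatives; in $U(\tau)x^p\frac{\partial^q}{\partial x^q}T_+^r$ the shift in $\tau$ is applied first, then the $x$-derivative, then multiplication by $x^pU(\tau)$. *)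

theory Defs
  imports "HOL-Analysis.Analysis" "HOL-Computational_Algebra.Polynomial"
begin

definition Lam :: "complex set" where
  "Lam = {z. Im z > 0}"

fun pdirs :: "complex list \<Rightarrow> (complex \<Rightarrow> complex) \<Rightarrow> (complex \<Rightarrow> complex)" where
  "pdirs [] f = f"
| "pdirs (v # vs) f = (\<lambda>z. frechet_derivative (pdirs vs f) (at z) v)"

definition smooth_on :: "complex set \<Rightarrow> (complex \<Rightarrow> complex) \<Rightarrow> bool" where
  "smooth_on U f \<longleftrightarrow> (\<forall>vs. \<forall>z\<in>U. pdirs vs f differentiable (at z))"

definition test_fun :: "(complex \<Rightarrow> complex) \<Rightarrow> bool" where
  "test_fun f \<longleftrightarrow> smooth_on Lam f \<and> (\<exists>C. compact C \<and> C \<subseteq> Lam \<and> (\<forall>z. z \<notin> C \<longrightarrow> f z = 0))"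

definition Dz :: "(complex \<Rightarrow> complex) \<Rightarrow> (complex \<Rightarrow> complex)" where
  "Dz f = (\<lambda>z. (frechet_derivative f (at z) 1 - \<i> * frechet_derivative f (at z) \<i>) / 2)"

definition Dzb :: "(complex \<Rightarrow> complex) \<Rightarrow> (complex \<Rightarrow> complex)" where
  "Dzb f = (\<lambda>z. (frechet_derivative f (at z) 1 + \<i> * frechet_derivative f (at z) \<i>) / 2)"

definition Kern :: "complex \<Rightarrow> complex \<Rightarrow> real \<Rightarrow> complex" where
  "Kern \<tau> z x = (2 * \<i> * (of_real x - z) * (of_real x - cnj z) / (z - cnj z)) powr \<tau>"

definition J :: "(complex \<Rightarrow> complex) \<Rightarrow> complex \<Rightarrow> real \<Rightarrow> complex" where
  "J f \<tau> x = integral Lam (\<lambda>z. Kern \<tau> z x * f z / of_real (4 * (Im z)\<^sup>2))"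

definition Omega :: "nat \<Rightarrow> (nat \<times> nat) set" where
  "Omega n = {(p, q). p \<le> n \<and> q \<le> n \<and> (p, q) \<noteq> (n, n)}"

definition A_space :: "(complex \<Rightarrow> complex) set" where
  "A_space = {V. \<exists>S c. finite S \<and> (\<forall>(n, p, q) \<in> S. (p, q) \<in> Omega n) \<and>
      V = (\<lambda>z. \<Sum>(n, p, q)\<in>S. c (n, p, q) * z ^ p * cnj z ^ q / (z - cnj z) ^ n)}"

definition opZ2 where "opZ2 f = (\<lambda>z. z\<^sup>2 * Dz f z)"
definition opZ1 where "opZ1 f = (\<lambda>z. z * Dz f z)"
definition opZ0 where "opZ0 f = Dz f"
definition opB2 where "opB2 f = (\<lambda>z. (cnj z)\<^sup>2 * Dzb f z)"
definition opB1 where "opB1 f = (\<lambda>z. cnj z * Dzb f z)"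
definition opB0 where "opB0 f = Dzb f"

definition mono_op :: "nat \<times> nat \<times> nat \<times> nat \<times> nat \<times> nat \<Rightarrow>
    (complex \<Rightarrow> complex) \<Rightarrow> (complex \<Rightarrow> complex)" where
  "mono_op i = (case i of (\<alpha>, \<beta>, \<gamma>, \<alpha>', \<beta>', \<gamma>') \<Rightarrow>
     (opZ2 ^^ \<alpha>) \<circ> (opZ1 ^^ \<beta>) \<circ> (opZ0 ^^ \<gamma>) \<circ> (opB2 ^^ \<alpha>') \<circ> (opB1 ^^ \<beta>') \<circ> (opB0 ^^ \<gamma>'))"

definition B_space :: "((complex \<Rightarrow> complex) \<Rightarrow> (complex \<Rightarrow> complex)) set" where
  "B_space = {D. \<exists>I V. finite I \<and> (\<forall>i\<in>I. V i \<in> A_space) \<and>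
      D = (\<lambda>f z. \<Sum>i\<in>I. V i z * mono_op i f z)}"

definition xderiv :: "nat \<Rightarrow> (real \<Rightarrow> complex) \<Rightarrow> (real \<Rightarrow> complex)" where
  "xderiv q g = ((\<lambda>h x. vector_derivative h (at x)) ^^ q) g"

text \<open>Rational function given as a reduced fraction P/Q; poles = roots of Q.\<close>
definition ratval :: "complex poly \<times> complex poly \<Rightarrow> complex \<Rightarrow> complex" where
  "ratval PQ \<tau> = poly (fst PQ) \<tau> / poly (snd PQ) \<tau>"

definition reduced_ratfun :: "complex poly \<times> complex poly \<Rightarrow> bool" where
  "reduced_ratfun PQ \<longleftrightarrow> snd PQ \<noteq> 0 \<and> coprime (fst PQ) (snd PQ)"

definition poles :: "complex poly \<times> complex poly \<Rightarrow> complex set" where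
  "poles PQ = {\<tau>. poly (snd PQ) \<tau> = 0}"

definition half_ints :: "complex set" where
  "half_ints = {of_int k / 2 | k. True}"

definition Dprime_apply ::
  "(nat \<times> nat \<times> int) set \<Rightarrow> (nat \<times> nat \<times> int \<Rightarrow> complex poly \<times> complex poly) \<Rightarrow>
   (complex \<Rightarrow> real \<Rightarrow> complex) \<Rightarrow> complex \<Rightarrow> real \<Rightarrow> complex" where
  "Dprime_apply S U \<Phi> \<tau> x =
     (\<Sum>(p, q, r)\<in>S. ratval (U (p, q, r)) \<tau> * of_real x ^ p * xderiv q (\<lambda>y. \<Phi> (\<tau> + of_int r) y) x)"

end

theory Submission
  imports Defs "HOL-Computational_Algebra.Fundamental_Theorem_Algebra"
begin

(*
  For z = a + i b in the half plane the kernel is w^\<tau> with w = ((x - a)^2 + b^2) / b > 0.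
  The functions 1/b, a/b and |z|^2/b can be solved for from w, dw/dx and d^2w/dx^2, so multiplying
  the kernel by them is a combination of multiplication by x, x-derivatives and shifts of \<tau>; the
  only divisions are by \<tau> + 1 and 2\<tau> + 1. This makes 1/(z - cnj z), z/(z - cnj z), cnj z/(z - cnj z)
  and z cnj z/(z - cnj z), which generate A multiplicatively, into multipliers that J turns into such
  operators. The operators z^k d/dz and (cnj z)^k d/d(cnj z), k \<le> 2, are moved onto the kernel by
  integration by parts; as d/dz w^\<tau> = \<tau> w^(\<tau> - 1) dw/dz, this leaves \<tau> times multipliers from A,
  quadratic in x, at \<tau> - 1. Operators \<Sum> U(\<tau>) x^p d^q/dx^q T^r with rational U are closed under
  composition (Leibniz' rule moves d/dx past x^p), so every D in B becomes such an operator on the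
  level of J. Everything is first proved for \<tau> off the half integers; at a half integer that is not a
  pole of the reduced coefficients both sides are continuous in \<tau>.
*)

section \<open>Rational coefficients with poles at half integers\<close>

lemma half_ints_iff: "t \<in> half_ints \<longleftrightarrow> (\<exists>k::int. t = of_int k / 2)"
  by (auto simp: half_ints_def)

lemma add_of_int_in_half_ints_iff [simp]: "t + of_int m \<in> half_ints \<longleftrightarrow> t \<in> half_ints"
proof
  assume "t + of_int m \<in> half_ints"
  then obtain k where "t + of_int m = of_int k / 2" by (auto simp: half_ints_iff)
  hence "t = of_int (k - 2 * m) / 2" by (simp add: field_simps)
  thus "t \<in> half_ints" unfolding half_ints_iff by blast
next
  assume "t \<in> half_ints"
  then obtain k where "t = of_int k / 2" by (auto simp: half_ints_iff)
  hence "t + of_int m = of_int (k + 2 * m) / 2" by (simp add: field_simps)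
  thus "t + of_int m \<in> half_ints" unfolding half_ints_iff by blast
qed

lemma Im_half_ints: "t \<in> half_ints \<Longrightarrow> Im t = 0"
proof -
  assume "t \<in> half_ints"
  then obtain k :: int where "t = of_int k / 2" unfolding half_ints_iff by blast
  thus ?thesis by (simp only: Im_divide_numeral complex_Im_of_int)
qed

definition rat_coeff :: "(complex \<Rightarrow> complex) \<Rightarrow> bool" where
  "rat_coeff u \<longleftrightarrow> (\<exists>P Q. Q \<noteq> 0 \<and> (\<forall>t. poly Q t = 0 \<longrightarrow> t \<in> half_ints) \<and>
      (\<forall>t. t \<notin> half_ints \<longrightarrow> u t = poly P t / poly Q t))"

lemma rat_coeff_poly: "rat_coeff (\<lambda>t. poly p t)"
  unfolding rat_coeff_def by (rule exI[of _ p], rule exI[of _ 1]) auto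

lemma rat_coeff_const: "rat_coeff (\<lambda>t. c)"
  using rat_coeff_poly[of "[:c:]"] by simp

lemma rat_coeff_id: "rat_coeff (\<lambda>t. t)"
  using rat_coeff_poly[of "[:0, 1:]"] by simp

lemma rat_coeff_add:
  assumes "rat_coeff u" "rat_coeff v"
  shows "rat_coeff (\<lambda>t. u t + v t)"
proof -
  obtain P1 Q1 where 1: "Q1 \<noteq> 0" "\<And>t. poly Q1 t = 0 \<Longrightarrow> t \<in> half_ints"
    "\<And>t. t \<notin> half_ints \<Longrightarrow> u t = poly P1 t / poly Q1 t"
    using assms(1) unfolding rat_coeff_def by blast
  obtain P2 Q2 where 2: "Q2 \<noteq> 0" "\<And>t. poly Q2 t = 0 \<Longrightarrow> t \<in> half_ints"
    "\<And>t. t \<notin> half_ints \<Longrightarrow> v t = poly P2 t / poly Q2 t"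
    using assms(2) unfolding rat_coeff_def by blast
  show ?thesis
    unfolding rat_coeff_def
  proof (intro exI conjI allI impI)
    show "Q1 * Q2 \<noteq> 0" using 1 2 by simp
    show "t \<in> half_ints" if "poly (Q1 * Q2) t = 0" for t using that 1 2 by auto
    show "u t + v t = poly (P1 * Q2 + P2 * Q1) t / poly (Q1 * Q2) t" if "t \<notin> half_ints" for t
    proof -
      have "poly Q1 t \<noteq> 0" "poly Q2 t \<noteq> 0" using 1(2) 2(2) that by blast+
      thus ?thesis using 1(3) 2(3) that by (simp add: field_simps)
    qed
  qed
qed

lemma rat_coeff_mult:
  assumes "rat_coeff u" "rat_coeff v"
  shows "rat_coeff (\<lambda>t. u t * v t)"
proof -
  obtain P1 Q1 where 1: "Q1 \<noteq> 0" "\<And>t. poly Q1 t = 0 \<Longrightarrow> t \<in> half_ints"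
    "\<And>t. t \<notin> half_ints \<Longrightarrow> u t = poly P1 t / poly Q1 t"
    using assms(1) unfolding rat_coeff_def by blast
  obtain P2 Q2 where 2: "Q2 \<noteq> 0" "\<And>t. poly Q2 t = 0 \<Longrightarrow> t \<in> half_ints"
    "\<And>t. t \<notin> half_ints \<Longrightarrow> v t = poly P2 t / poly Q2 t"
    using assms(2) unfolding rat_coeff_def by blast
  show ?thesis
    unfolding rat_coeff_def
  proof (intro exI conjI allI impI)
    show "Q1 * Q2 \<noteq> 0" using 1 2 by simp
    show "t \<in> half_ints" if "poly (Q1 * Q2) t = 0" for t using that 1 2 by auto
    show "u t * v t = poly (P1 * P2) t / poly (Q1 * Q2) t" if "t \<notin> half_ints" for t
      using 1 2 that by simp
  qed
qed

lemma rat_coeff_sum: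
  "finite A \<Longrightarrow> (\<And>a. a \<in> A \<Longrightarrow> rat_coeff (u a)) \<Longrightarrow> rat_coeff (\<lambda>t. \<Sum>a\<in>A. u a t)"
  by (induction A rule: finite_induct) (auto intro: rat_coeff_add rat_coeff_const)

lemma rat_coeff_shift:
  assumes "rat_coeff u"
  shows "rat_coeff (\<lambda>t. u (t + of_int m))"
proof -
  obtain P Q where PQ: "Q \<noteq> 0" "\<And>t. poly Q t = 0 \<Longrightarrow> t \<in> half_ints"
    "\<And>t. t \<notin> half_ints \<Longrightarrow> u t = poly P t / poly Q t"
    using assms unfolding rat_coeff_def by blast
  define s :: "complex poly" where "s = [:of_int m, 1:]"
  have poly_s: "poly (pcompose R s) t = poly R (t + of_int m)" for R t
    by (simp add: s_def poly_pcompose add.commute)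
  show ?thesis
    unfolding rat_coeff_def
  proof (intro exI conjI allI impI)
    show "pcompose Q s \<noteq> 0"
    proof
      assume "pcompose Q s = 0"
      hence "poly Q t = 0" for t using poly_s[of Q "t - of_int m"] by simp
      thus False using PQ(1) poly_all_0_iff_0 by blast
    qed
    show "t \<in> half_ints" if "poly (pcompose Q s) t = 0" for t
      using that PQ(2)[of "t + of_int m"] by (simp add: poly_s)
    show "u (t + of_int m) = poly (pcompose P s) t / poly (pcompose Q s) t" if "t \<notin> half_ints" for t
      using that PQ(3) by (simp add: poly_s)
  qed
qed

lemma rat_coeff_inverse_half_linear: "rat_coeff (\<lambda>t. 1 / (2 * t + of_int k))"
  unfolding rat_coeff_def
proof (intro exI conjI allI impI)
  show "[:of_int k, 2:] \<noteq> (0 :: complex poly)" by simp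
  show "t \<in> half_ints" if "poly [:of_int k, 2:] t = 0" for t
  proof -
    have "t = of_int (- k) / 2" using that by (simp add: field_simps add_eq_0_iff)
    thus ?thesis unfolding half_ints_iff by blast
  qed
  show "1 / (2 * t + of_int k) = poly 1 t / poly [:of_int k, 2:] t" for t :: complex
    by (simp add: algebra_simps)
qed

lemma rat_coeff_inverse_linear: "rat_coeff (\<lambda>t. 1 / (t + of_int k))"
proof -
  have "rat_coeff (\<lambda>t. 2 * (1 / (2 * t + of_int (2 * k))))"
    by (intro rat_coeff_mult rat_coeff_const rat_coeff_inverse_half_linear)
  moreover have "2 * (1 / (2 * t + of_int (2 * k))) = 1 / (t + of_int k)" for t :: complex
    using mult_divide_mult_cancel_left[of 2 1 "t + of_int k"] by (simp add: algebra_simps)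
  ultimately show ?thesis by simp
qed

lemma common_linear_factor_if_not_coprime:
  fixes P Q :: "complex poly"
  assumes "Q \<noteq> 0" "\<not> coprime P Q"
  obtains z where "[:-z, 1:] dvd P" "[:-z, 1:] dvd Q"
proof -
  obtain c where c: "c dvd P" "c dvd Q" "\<not> is_unit c"
    using assms(2) by (auto simp: coprime_def)
  have "c \<noteq> 0" using c(2) assms(1) by auto
  hence "\<not> constant (poly c)"
    using c(3) is_unit_iff_degree constant_degree by metis
  then obtain z where "poly c z = 0" using fundamental_theorem_of_algebra by blast
  hence "[:-z, 1:] dvd c" by (simp add: poly_eq_0_iff_dvd)
  thus ?thesis using that c(1,2) dvd_trans by blast
qed

lemma exists_coprime_fraction:
  fixes P Q :: "complex poly"
  assumes "Q \<noteq> 0"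
  shows "\<exists>P' Q'. Q' \<noteq> 0 \<and> coprime P' Q' \<and> (\<forall>t. poly Q' t = 0 \<longrightarrow> poly Q t = 0) \<and>
           (\<forall>t. poly Q t \<noteq> 0 \<longrightarrow> poly P' t / poly Q' t = poly P t / poly Q t)"
  using assms
proof (induction "degree Q" arbitrary: P Q rule: less_induct)
  case less
  show ?case
  proof (cases "coprime P Q")
    case True
    thus ?thesis using less.prems by blast
  next
    case False
    then obtain z where "[:-z, 1:] dvd P" "[:-z, 1:] dvd Q"
      using common_linear_factor_if_not_coprime less.prems by blast
    then obtain P1 Q1 where P: "P = [:-z, 1:] * P1" and Q: "Q = [:-z, 1:] * Q1"
      by (auto elim!: dvdE)
    have "Q1 \<noteq> 0" using less.prems Q by auto
    hence "degree Q1 < degree Q" unfolding Q by (subst degree_mult_eq) auto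
    then obtain P' Q' where PQ': "Q' \<noteq> 0" "coprime P' Q'" "\<And>t. poly Q' t = 0 \<Longrightarrow> poly Q1 t = 0"
      "\<And>t. poly Q1 t \<noteq> 0 \<Longrightarrow> poly P' t / poly Q' t = poly P1 t / poly Q1 t"
      using less.hyps \<open>Q1 \<noteq> 0\<close> by blast
    have "poly Q t = 0" if "poly Q' t = 0" for t
      using PQ'(3)[OF that] by (simp add: Q)
    moreover have "poly P' t / poly Q' t = poly P t / poly Q t" if "poly Q t \<noteq> 0" for t
    proof -
      have "poly [:-z, 1:] t \<noteq> 0" "poly Q1 t \<noteq> 0"
        using that unfolding Q poly_mult by auto
      hence "poly P t / poly Q t = poly P1 t / poly Q1 t"
        unfolding P Q poly_mult by simp
      thus ?thesis using PQ'(4) \<open>poly Q1 t \<noteq> 0\<close> by simp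
    qed
    ultimately show ?thesis using PQ'(1,2) by blast
  qed
qed

lemma rat_coeff_reduced_ratfun:
  assumes "rat_coeff u"
  obtains PQ where "reduced_ratfun PQ" "poles PQ \<subseteq> half_ints"
    "\<And>t. t \<notin> half_ints \<Longrightarrow> ratval PQ t = u t"
proof -
  obtain P Q where PQ: "Q \<noteq> 0" "\<And>t. poly Q t = 0 \<Longrightarrow> t \<in> half_ints"
    "\<And>t. t \<notin> half_ints \<Longrightarrow> u t = poly P t / poly Q t"
    using assms unfolding rat_coeff_def by blast
  obtain P' Q' where PQ': "Q' \<noteq> 0" "coprime P' Q'" "\<And>t. poly Q' t = 0 \<Longrightarrow> poly Q t = 0"
    "\<And>t. poly Q t \<noteq> 0 \<Longrightarrow> poly P' t / poly Q' t = poly P t / poly Q t"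
    using exists_coprime_fraction[OF PQ(1)] by blast
  show ?thesis
  proof (rule that[of "(P', Q')"])
    show "reduced_ratfun (P', Q')" using PQ'(1,2) by (simp add: reduced_ratfun_def)
    show "poles (P', Q') \<subseteq> half_ints" using PQ(2) PQ'(3) by (auto simp: poles_def)
    show "ratval (P', Q') t = u t" if "t \<notin> half_ints" for t
      using PQ(2,3) PQ'(4) that by (auto simp: ratval_def)
  qed
qed

section \<open>The operators \<open>D'\<close>\<close>

text \<open>A term \<open>(u, p, q, r)\<close> stands for \<open>u(\<tau>) x\<^sup>p (d/dx)\<^sup>q T\<^sub>+\<^sup>r\<close>.\<close>

type_synonym sdop = "((complex \<Rightarrow> complex) \<times> nat \<times> nat \<times> int) list"

definition sdop_apply :: "sdop \<Rightarrow> (complex \<Rightarrow> real \<Rightarrow> complex) \<Rightarrow> complex \<Rightarrow> real \<Rightarrow> complex" where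
  "sdop_apply L \<Phi> \<tau> x =
     (\<Sum>(u, p, q, r)\<leftarrow>L. u \<tau> * of_real x ^ p * xderiv q (\<lambda>y. \<Phi> (\<tau> + of_int r) y) x)"

definition rat_sdop :: "sdop \<Rightarrow> bool" where
  "rat_sdop L \<longleftrightarrow> (\<forall>e\<in>set L. rat_coeff (fst e))"

lemma sdop_apply_Nil [simp]: "sdop_apply [] \<Phi> \<tau> x = 0"
  by (simp add: sdop_apply_def)

lemma sdop_apply_Cons [simp]:
  "sdop_apply ((u, p, q, r) # L) \<Phi> \<tau> x =
     u \<tau> * of_real x ^ p * xderiv q (\<lambda>y. \<Phi> (\<tau> + of_int r) y) x + sdop_apply L \<Phi> \<tau> x"
  by (simp add: sdop_apply_def)

lemma sdop_apply_append [simp]: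
  "sdop_apply (L1 @ L2) \<Phi> \<tau> x = sdop_apply L1 \<Phi> \<tau> x + sdop_apply L2 \<Phi> \<tau> x"
  by (simp add: sdop_apply_def)

lemma rat_sdop_Nil [simp]: "rat_sdop []"
  by (simp add: rat_sdop_def)

lemma rat_sdop_Cons [simp]: "rat_sdop ((u, p, q, r) # L) \<longleftrightarrow> rat_coeff u \<and> rat_sdop L"
  by (simp add: rat_sdop_def)

lemma rat_sdop_append [simp]: "rat_sdop (L1 @ L2) \<longleftrightarrow> rat_sdop L1 \<and> rat_sdop L2"
  by (auto simp: rat_sdop_def)

lemma sdop_apply_cong:
  assumes "\<And>u p q r. (u, p, q, r) \<in> set L \<Longrightarrow> \<Phi> (\<tau> + of_int r) = \<Psi> (\<tau> + of_int r)"
  shows "sdop_apply L \<Phi> \<tau> x = sdop_apply L \<Psi> \<tau> x"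
  using assms
proof (induction L)
  case (Cons e L)
  obtain u p q r where e: "e = (u, p, q, r)" by (cases e)
  have "\<Phi> (\<tau> + of_int r) = \<Psi> (\<tau> + of_int r)" using Cons.prems e by auto
  moreover have "sdop_apply L \<Phi> \<tau> x = sdop_apply L \<Psi> \<tau> x" using Cons by auto
  ultimately show ?case by (simp add: e eta_contract_eq)
qed simp

definition sdop_scale :: "(complex \<Rightarrow> complex) \<Rightarrow> sdop \<Rightarrow> sdop" where
  "sdop_scale c = map (\<lambda>(u, p, q, r). (\<lambda>t. c t * u t, p, q, r))"

definition sdop_xpow :: "nat \<Rightarrow> sdop \<Rightarrow> sdop" where
  "sdop_xpow a = map (\<lambda>(u, p, q, r). (u, p + a, q, r))"

definition sdop_shift :: "int \<Rightarrow> sdop \<Rightarrow> sdop" where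
  "sdop_shift m = map (\<lambda>(u, p, q, r). (\<lambda>t. u (t + of_int m), p, q, r + m))"

lemma sdop_apply_scale: "sdop_apply (sdop_scale c L) \<Phi> \<tau> x = c \<tau> * sdop_apply L \<Phi> \<tau> x"
  by (induction L) (auto simp: sdop_scale_def algebra_simps)

lemma sdop_apply_xpow: "sdop_apply (sdop_xpow a L) \<Phi> \<tau> x = of_real x ^ a * sdop_apply L \<Phi> \<tau> x"
  by (induction L) (auto simp: sdop_xpow_def algebra_simps power_add)

lemma sdop_apply_shift: "sdop_apply (sdop_shift m L) \<Phi> \<tau> x = sdop_apply L \<Phi> (\<tau> + of_int m) x"
  by (induction L) (auto simp: sdop_shift_def algebra_simps)

lemma rat_sdop_scale: "rat_coeff c \<Longrightarrow> rat_sdop L \<Longrightarrow> rat_sdop (sdop_scale c L)"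
  by (induction L) (auto simp: sdop_scale_def intro: rat_coeff_mult)

lemma rat_sdop_xpow: "rat_sdop L \<Longrightarrow> rat_sdop (sdop_xpow a L)"
  by (induction L) (auto simp: sdop_xpow_def)

lemma rat_sdop_shift: "rat_sdop L \<Longrightarrow> rat_sdop (sdop_shift m L)"
  by (induction L) (auto simp: sdop_shift_def intro: rat_coeff_shift)

lemma xderiv_Suc: "xderiv (Suc q) h x = vector_derivative (xderiv q h) (at x)"
  by (simp add: xderiv_def)

definition xsmooth :: "(real \<Rightarrow> complex) \<Rightarrow> bool" where
  "xsmooth h \<longleftrightarrow> (\<forall>q x. (xderiv q h has_vector_derivative xderiv (Suc q) h x) (at x))"

definition sdop_xderiv :: "sdop \<Rightarrow> sdop" where
  "sdop_xderiv L = concat (map (\<lambda>(u, p, q, r). [(\<lambda>t. of_nat p * u t, p - 1, q, r), (u, p, Suc q, r)]) L)"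

lemma sdop_xderiv_Nil [simp]: "sdop_xderiv [] = []"
  by (simp add: sdop_xderiv_def)

lemma sdop_xderiv_Cons [simp]:
  "sdop_xderiv ((u, p, q, r) # L) = (\<lambda>t. of_nat p * u t, p - 1, q, r) # (u, p, Suc q, r) # sdop_xderiv L"
  by (simp add: sdop_xderiv_def)

lemma rat_sdop_xderiv: "rat_sdop L \<Longrightarrow> rat_sdop (sdop_xderiv L)"
proof (induction L)
  case (Cons e L)
  thus ?case by (cases e) (auto intro: rat_coeff_mult rat_coeff_const)
qed simp

lemma rat_sdop_xderiv_funpow: "rat_sdop L \<Longrightarrow> rat_sdop ((sdop_xderiv ^^ n) L)"
  by (induction n) (auto intro: rat_sdop_xderiv)

lemma has_vector_derivative_of_real_power:
  "((\<lambda>y. (of_real y :: complex) ^ p) has_vector_derivative of_nat p * of_real x ^ (p - 1)) (at x)"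
proof -
  have "((\<lambda>y. of_real (y ^ p) :: complex) has_vector_derivative of_real (real p * x ^ (p - 1))) (at x)"
    by (intro has_vector_derivative_of_real) (auto intro!: derivative_eq_intros)
  thus ?thesis by simp
qed

lemma sdop_apply_has_vector_derivative:
  assumes "\<And>\<sigma>. xsmooth (\<Phi> \<sigma>)"
  shows "((\<lambda>y. sdop_apply L \<Phi> \<tau> y) has_vector_derivative sdop_apply (sdop_xderiv L) \<Phi> \<tau> x) (at x)"
proof (induction L)
  case (Cons e L)
  obtain u p q r where e: "e = (u, p, q, r)" by (cases e)
  define h where "h = xderiv q (\<lambda>y. \<Phi> (\<tau> + of_int r) y)"
  have dh: "(h has_vector_derivative xderiv (Suc q) (\<lambda>y. \<Phi> (\<tau> + of_int r) y) x) (at x)"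
    using assms[of "\<tau> + of_int r"] unfolding h_def xsmooth_def by (simp add: eta_contract_eq)
  have "((\<lambda>y. u \<tau> * (of_real y ^ p * h y)) has_vector_derivative
     u \<tau> * (of_real x ^ p * xderiv (Suc q) (\<lambda>y. \<Phi> (\<tau> + of_int r) y) x +
       of_nat p * of_real x ^ (p - 1) * h x)) (at x)"
    by (intro has_vector_derivative_mult_right has_vector_derivative_mult
        has_vector_derivative_of_real_power dh)
  from has_vector_derivative_add[OF this Cons.IH] show ?case
    by (simp add: e h_def algebra_simps)
qed simp

lemma sdop_apply_xderiv:
  assumes "\<And>\<sigma>. xsmooth (\<Phi> \<sigma>)"
  shows "xderiv q (\<lambda>y. sdop_apply L \<Phi> \<tau> y) = (\<lambda>y. sdop_apply ((sdop_xderiv ^^ q) L) \<Phi> \<tau> y)"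
proof (induction q)
  case 0
  show ?case by (simp add: xderiv_def)
next
  case (Suc q)
  show ?case
    using vector_derivative_at[OF sdop_apply_has_vector_derivative[OF assms]]
    by (simp add: xderiv_Suc Suc.IH)
qed

definition sdop_comp :: "sdop \<Rightarrow> sdop \<Rightarrow> sdop" where
  "sdop_comp L1 L2 = concat (map (\<lambda>(u, p, q, r).
     map (\<lambda>(u', p', q', r'). (\<lambda>t. u t * u' (t + of_int r), p + p', q', r + r'))
       ((sdop_xderiv ^^ q) L2)) L1)"

lemma sdop_comp_Cons:
  "sdop_comp ((u, p, q, r) # L1) L2 =
     map (\<lambda>(u', p', q', r'). (\<lambda>t. u t * u' (t + of_int r), p + p', q', r + r')) ((sdop_xderiv ^^ q) L2)
     @ sdop_comp L1 L2"
  by (simp add: sdop_comp_def)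

lemma sdop_apply_comp:
  assumes "\<And>\<sigma>. xsmooth (\<Phi> \<sigma>)"
  shows "sdop_apply L1 (\<lambda>\<sigma> y. sdop_apply L2 \<Phi> \<sigma> y) \<tau> x = sdop_apply (sdop_comp L1 L2) \<Phi> \<tau> x"
proof (induction L1)
  case Nil
  show ?case by (simp add: sdop_comp_def)
next
  case (Cons e L1)
  obtain u p q r where e: "e = (u, p, q, r)" by (cases e)
  have "sdop_apply (map (\<lambda>(u', p', q', r'). (\<lambda>t. u t * u' (t + of_int r), p + p', q', r + r')) M) \<Phi> \<tau> x =
      u \<tau> * of_real x ^ p * sdop_apply M \<Phi> (\<tau> + of_int r) x" for M
    by (induction M) (auto simp: algebra_simps power_add)
  thus ?case
    using Cons.IH by (simp add: e sdop_comp_Cons sdop_apply_xderiv[OF assms])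
qed

lemma rat_sdop_comp: "rat_sdop L1 \<Longrightarrow> rat_sdop L2 \<Longrightarrow> rat_sdop (sdop_comp L1 L2)"
proof (induction L1)
  case Nil
  show ?case by (simp add: sdop_comp_def)
next
  case (Cons e L1)
  obtain u p q r where e: "e = (u, p, q, r)" by (cases e)
  have "rat_sdop (map (\<lambda>(u', p', q', r'). (\<lambda>t. u t * u' (t + of_int r), p + p', q', r + r')) M)"
    if "rat_sdop M" for M
    using that Cons.prems
    by (induction M) (auto simp: e intro!: rat_coeff_mult rat_coeff_shift)
  thus ?case
    using Cons rat_sdop_xderiv_funpow by (auto simp: e sdop_comp_Cons)
qed

lemma sdop_apply_grouped:
  "sdop_apply L \<Phi> \<tau> x =
     (\<Sum>k\<in>snd ` set L. (\<Sum>i | i < length L \<and> snd (L ! i) = k. fst (L ! i) \<tau>) *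
        (case k of (p, q, r) \<Rightarrow> of_real x ^ p * xderiv q (\<lambda>y. \<Phi> (\<tau> + of_int r) y) x))"
proof -
  define G where "G k = (case k of (p, q, r) \<Rightarrow> of_real x ^ p * xderiv q (\<lambda>y. \<Phi> (\<tau> + of_int r) y) x)"
    for k :: "nat \<times> nat \<times> int"
  have "sdop_apply L \<Phi> \<tau> x = (\<Sum>e\<leftarrow>L. fst e \<tau> * G (snd e))"
    unfolding sdop_apply_def G_def by (intro arg_cong[where f = sum_list] map_cong) auto
  also have "\<dots> = (\<Sum>i<length L. fst (L ! i) \<tau> * G (snd (L ! i)))"
    by (simp add: sum_list_sum_nth atLeast0LessThan)
  also have "\<dots> = (\<Sum>k\<in>snd ` set L.
      \<Sum>i | i \<in> {..<length L} \<and> snd (L ! i) = k. fst (L ! i) \<tau> * G (snd (L ! i)))"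
    by (rule sum.group[symmetric]) (auto simp: nth_mem)
  also have "\<dots> = (\<Sum>k\<in>snd ` set L. (\<Sum>i | i < length L \<and> snd (L ! i) = k. fst (L ! i) \<tau>) * G k)"
    by (intro sum.cong) (auto simp: sum_distrib_right)
  finally show ?thesis unfolding G_def .
qed

lemma sdop_as_Dprime:
  assumes "rat_sdop L"
  obtains S U where "finite S" "\<And>k. k \<in> S \<Longrightarrow> reduced_ratfun (U k) \<and> poles (U k) \<subseteq> half_ints"
    "\<And>\<Phi> \<tau> x. \<tau> \<notin> half_ints \<Longrightarrow> sdop_apply L \<Phi> \<tau> x = Dprime_apply S U \<Phi> \<tau> x"
proof -
  define coeff where "coeff k t = (\<Sum>i | i < length L \<and> snd (L ! i) = k. fst (L ! i) t)" for k t
  have "rat_coeff (coeff k)" for k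
    unfolding coeff_def[abs_def] using assms
    by (intro rat_coeff_sum) (auto simp: rat_sdop_def nth_mem)
  hence "\<forall>k. \<exists>PQ. reduced_ratfun PQ \<and> poles PQ \<subseteq> half_ints \<and>
           (\<forall>t. t \<notin> half_ints \<longrightarrow> ratval PQ t = coeff k t)"
    by (metis rat_coeff_reduced_ratfun)
  then obtain U where U: "\<And>k. reduced_ratfun (U k)" "\<And>k. poles (U k) \<subseteq> half_ints"
    "\<And>k t. t \<notin> half_ints \<Longrightarrow> ratval (U k) t = coeff k t"
    by metis
  show ?thesis
  proof (rule that[of "snd ` set L" U])
    fix \<Phi> \<tau> x assume "\<tau> \<notin> half_ints"
    thus "sdop_apply L \<Phi> \<tau> x = Dprime_apply (snd ` set L) U \<Phi> \<tau> x"
      unfolding sdop_apply_grouped Dprime_apply_def coeff_def[symmetric]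
      by (intro sum.cong) (auto simp: U(3) mult.assoc)
  qed (use U in auto)
qed

definition J_repr :: "((complex \<Rightarrow> complex) \<Rightarrow> complex \<Rightarrow> real \<Rightarrow> complex) \<Rightarrow> bool" where
  "J_repr F \<longleftrightarrow> (\<exists>L. rat_sdop L \<and>
     (\<forall>g \<tau> x. test_fun g \<longrightarrow> \<tau> \<notin> half_ints \<longrightarrow> F g \<tau> x = sdop_apply L (J g) \<tau> x))"

lemma J_repr_J: "J_repr J"
  unfolding J_repr_def
  by (rule exI[of _ "[(\<lambda>_. 1, 0, 0, 0)]"]) (auto intro: rat_coeff_const simp: xderiv_def eta_contract_eq)

lemma J_repr_zero: "J_repr (\<lambda>g \<tau> x. 0)"
  unfolding J_repr_def by (rule exI[of _ "[]"]) simp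

lemma J_repr_add: "J_repr F1 \<Longrightarrow> J_repr F2 \<Longrightarrow> J_repr (\<lambda>g \<tau> x. F1 g \<tau> x + F2 g \<tau> x)"
  unfolding J_repr_def by (metis rat_sdop_append sdop_apply_append)

lemma J_repr_sum:
  "finite I \<Longrightarrow> (\<And>i. i \<in> I \<Longrightarrow> J_repr (F i)) \<Longrightarrow> J_repr (\<lambda>g \<tau> x. \<Sum>i\<in>I. F i g \<tau> x)"
  by (induction I rule: finite_induct) (simp_all add: J_repr_zero J_repr_add)

lemma J_repr_scale: "rat_coeff c \<Longrightarrow> J_repr F \<Longrightarrow> J_repr (\<lambda>g \<tau> x. c \<tau> * F g \<tau> x)"
  unfolding J_repr_def by (metis rat_sdop_scale sdop_apply_scale)

lemma J_repr_xpow: "J_repr F \<Longrightarrow> J_repr (\<lambda>g \<tau> x. of_real x ^ a * F g \<tau> x)"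
  unfolding J_repr_def by (metis rat_sdop_xpow sdop_apply_xpow)

lemma J_repr_shift: "J_repr F \<Longrightarrow> J_repr (\<lambda>g \<tau> x. F g (\<tau> + of_int m) x)"
  unfolding J_repr_def by (metis rat_sdop_shift sdop_apply_shift add_of_int_in_half_ints_iff)

lemma J_repr_cong:
  "J_repr F \<Longrightarrow> (\<And>g \<tau> x. test_fun g \<Longrightarrow> \<tau> \<notin> half_ints \<Longrightarrow> F g \<tau> x = F' g \<tau> x) \<Longrightarrow> J_repr F'"
  unfolding J_repr_def by metis

section \<open>The kernel\<close>

lemma mem_Lam [simp]: "z \<in> Lam \<longleftrightarrow> 0 < Im z"
  by (simp add: Lam_def)

lemma open_Lam: "open Lam"
  unfolding Lam_def by (rule open_halfspace_Im_gt)

text \<open>On \<open>Lam\<close> the base of \<open>Kern\<close> is the positive real \<open>kern_base z x\<close>, so the principal power is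
  an exponential.\<close>
definition kern_base :: "complex \<Rightarrow> real \<Rightarrow> real" where
  "kern_base z x = ((x - Re z)\<^sup>2 + (Im z)\<^sup>2) / Im z"

definition kern :: "complex \<Rightarrow> complex \<Rightarrow> real \<Rightarrow> complex" where
  "kern \<sigma> z x = exp (\<sigma> * of_real (ln (kern_base z x)))"

lemma kern_base_pos: "Im z > 0 \<Longrightarrow> kern_base z x > 0"
  unfolding kern_base_def by (intro divide_pos_pos add_nonneg_pos) auto

lemma Kern_eq_kern:
  assumes "Im z > 0"
  shows "Kern \<sigma> z x = kern \<sigma> z x"
proof -
  have 1: "(of_real x - z) * (of_real x - cnj z) = of_real ((x - Re z)\<^sup>2 + (Im z)\<^sup>2)"
    by (simp add: complex_eq_iff power2_eq_square algebra_simps)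
  have 2: "z - cnj z = 2 * \<i> * of_real (Im z)"
    by (simp add: complex_eq_iff)
  have "2 * \<i> * (of_real x - z) * (of_real x - cnj z) / (z - cnj z) = of_real (kern_base z x)"
    using assms unfolding 2 kern_base_def mult.assoc 1 by (simp add: field_simps)
  moreover have "of_real (kern_base z x) \<noteq> (0 :: complex)"
    using kern_base_pos[OF assms, of x] by simp
  ultimately show ?thesis
    unfolding Kern_def kern_def powr_def using Ln_of_real[OF kern_base_pos[OF assms]] by simp
qed

lemma kern_add_1:
  assumes "Im z > 0"
  shows "kern (\<sigma> + 1) z x = of_real (kern_base z x) * kern \<sigma> z x"
proof -
  have "exp (of_real (ln (kern_base z x))) = (of_real (kern_base z x) :: complex)"
    using kern_base_pos[OF assms] by (simp flip: of_real_exp)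
  thus ?thesis unfolding kern_def by (simp add: distrib_right exp_add mult.commute)
qed

lemma kern_eq_kern_minus_1:
  "Im z > 0 \<Longrightarrow> kern \<sigma> z x = of_real (kern_base z x) * kern (\<sigma> - 1) z x"
  using kern_add_1[of z "\<sigma> - 1" x] by simp

lemma kern_has_vector_derivative:
  assumes "Im z > 0"
  shows "((\<lambda>y. kern \<sigma> z y) has_vector_derivative
           \<sigma> * of_real (2 * (x - Re z) / Im z) * kern (\<sigma> - 1) z x) (at x)"
proof -
  have pos: "kern_base z x > 0" using kern_base_pos[OF assms] .
  hence nz: "(of_real (kern_base z x) :: complex) \<noteq> 0" by simp
  have "((\<lambda>y. kern_base z y) has_real_derivative 2 * (x - Re z) / Im z) (at x)"
    using assms unfolding kern_base_def
    by (auto intro!: derivative_eq_intros simp: field_simps power2_eq_square)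
  hence "((\<lambda>y. \<sigma> * of_real (ln (kern_base z y))) has_vector_derivative
      \<sigma> * of_real (2 * (x - Re z) / Im z / kern_base z x)) (at x)"
    by (intro has_vector_derivative_mult_right has_vector_derivative_of_real)
       (auto intro!: derivative_eq_intros pos simp: field_simps)
  from field_vector_diff_chain_at[OF this DERIV_exp]
  have "((\<lambda>y. kern \<sigma> z y) has_vector_derivative
      \<sigma> * of_real (2 * (x - Re z) / Im z / kern_base z x) * kern \<sigma> z x) (at x)"
    by (simp add: o_def kern_def)
  moreover have "\<sigma> * of_real (2 * (x - Re z) / Im z / kern_base z x) * kern \<sigma> z x
      = \<sigma> * of_real (2 * (x - Re z) / Im z) * kern (\<sigma> - 1) z x"
    using kern_eq_kern_minus_1[OF assms, of \<sigma> x] nz assms by (simp add: field_simps)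
  ultimately show ?thesis by simp
qed

lemma continuous_on_kern:
  "continuous_on (UNIV \<times> Lam \<times> UNIV) (\<lambda>(\<sigma>, z, x). kern (\<sigma> - s) z x)"
proof -
  have "continuous_on (UNIV \<times> Lam \<times> UNIV) (\<lambda>p. kern_base (fst (snd p)) (snd (snd p)))"
    unfolding kern_base_def by (intro continuous_intros) auto
  moreover have "kern_base z x \<noteq> 0" if "Im z > 0" for z x
    using kern_base_pos[OF that, of x] by simp
  hence "\<forall>p\<in>UNIV \<times> Lam \<times> UNIV. kern_base (fst (snd p)) (snd (snd p)) \<noteq> 0"
    by auto
  ultimately show ?thesis
    unfolding kern_def case_prod_beta by (intro continuous_intros) auto
qed

definition Kern_xderiv :: "nat \<Rightarrow> complex \<Rightarrow> complex \<Rightarrow> real \<Rightarrow> complex" where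
  "Kern_xderiv q \<sigma> z x = xderiv q (\<lambda>y. Kern \<sigma> z y) x"

text \<open>Finite sums \<open>\<Sum> c \<sigma> z * x ^ a * kern (\<sigma> - j) z x\<close>; the \<open>x\<close>-derivatives of the kernel
  are of this form.\<close>
type_synonym kterms = "((complex \<Rightarrow> complex \<Rightarrow> complex) \<times> nat \<times> nat) list"

definition kterms_eval :: "kterms \<Rightarrow> complex \<Rightarrow> complex \<Rightarrow> real \<Rightarrow> complex" where
  "kterms_eval Ls \<sigma> z x = (\<Sum>(c, a, j)\<leftarrow>Ls. c \<sigma> z * of_real x ^ a * kern (\<sigma> - of_nat j) z x)"

definition kterms_continuous :: "kterms \<Rightarrow> bool" where
  "kterms_continuous Ls \<longleftrightarrow> (\<forall>e\<in>set Ls. continuous_on (UNIV \<times> Lam) (\<lambda>(\<sigma>, z). fst e \<sigma> z))"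

definition kterms_xderiv :: "kterms \<Rightarrow> kterms" where
  "kterms_xderiv Ls = concat (map (\<lambda>(c, a, j).
     [(\<lambda>\<sigma> z. c \<sigma> z * of_nat a, a - 1, j),
      (\<lambda>\<sigma> z. c \<sigma> z * (\<sigma> - of_nat j) * 2 / of_real (Im z), a + 1, j + 1),
      (\<lambda>\<sigma> z. - (c \<sigma> z * (\<sigma> - of_nat j) * 2 * of_real (Re z) / of_real (Im z)), a, j + 1)]) Ls)"

lemma kterms_eval_Nil [simp]: "kterms_eval [] \<sigma> z x = 0"
  by (simp add: kterms_eval_def)

lemma kterms_eval_Cons [simp]:
  "kterms_eval ((c, a, j) # Ls) \<sigma> z x =
     c \<sigma> z * of_real x ^ a * kern (\<sigma> - of_nat j) z x + kterms_eval Ls \<sigma> z x"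
  by (simp add: kterms_eval_def)

lemma kterms_eval_append [simp]:
  "kterms_eval (L1 @ L2) \<sigma> z x = kterms_eval L1 \<sigma> z x + kterms_eval L2 \<sigma> z x"
  by (simp add: kterms_eval_def)

lemma kterms_continuous_Nil [simp]: "kterms_continuous []"
  by (simp add: kterms_continuous_def)

lemma kterms_continuous_Cons [simp]:
  "kterms_continuous ((c, a, j) # Ls) \<longleftrightarrow>
     continuous_on (UNIV \<times> Lam) (\<lambda>(\<sigma>, z). c \<sigma> z) \<and> kterms_continuous Ls"
  by (simp add: kterms_continuous_def)

lemma kterms_xderiv_Nil [simp]: "kterms_xderiv [] = []"
  by (simp add: kterms_xderiv_def)

lemma kterms_xderiv_Cons [simp]:
  "kterms_xderiv ((c, a, j) # Ls) =
     [(\<lambda>\<sigma> z. c \<sigma> z * of_nat a, a - 1, j),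
      (\<lambda>\<sigma> z. c \<sigma> z * (\<sigma> - of_nat j) * 2 / of_real (Im z), a + 1, j + 1),
      (\<lambda>\<sigma> z. - (c \<sigma> z * (\<sigma> - of_nat j) * 2 * of_real (Re z) / of_real (Im z)), a, j + 1)]
     @ kterms_xderiv Ls"
  by (simp add: kterms_xderiv_def)

lemma kterms_eval_has_vector_derivative:
  assumes "Im z > 0"
  shows "((\<lambda>y. kterms_eval Ls \<sigma> z y) has_vector_derivative kterms_eval (kterms_xderiv Ls) \<sigma> z x) (at x)"
proof (induction Ls)
  case (Cons e Ls)
  obtain c a j where e: "e = (c, a, j)" by (cases e)
  define K0 where "K0 = kern (\<sigma> - of_nat j) z x"
  define K1 where "K1 = kern (\<sigma> - of_nat (Suc j)) z x"
  have K1: "kern (\<sigma> - of_nat j - 1) z x = K1" by (simp add: K1_def algebra_simps)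
  have "((\<lambda>y. c \<sigma> z * (of_real y ^ a * kern (\<sigma> - of_nat j) z y)) has_vector_derivative
     c \<sigma> z * (of_real x ^ a * ((\<sigma> - of_nat j) * of_real (2 * (x - Re z) / Im z) *
       kern (\<sigma> - of_nat j - 1) z x) + of_nat a * of_real x ^ (a - 1) * K0)) (at x)"
    unfolding K0_def
    by (intro has_vector_derivative_mult_right has_vector_derivative_mult
        has_vector_derivative_of_real_power kern_has_vector_derivative assms)
  hence "((\<lambda>y. c \<sigma> z * (of_real y ^ a * kern (\<sigma> - of_nat j) z y)) has_vector_derivative
     c \<sigma> z * (of_real x ^ a * ((\<sigma> - of_nat j) * of_real (2 * (x - Re z) / Im z) * K1) +
       of_nat a * of_real x ^ (a - 1) * K0)) (at x)"
    unfolding K1 .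
  moreover have ev: "kterms_eval (kterms_xderiv [e]) \<sigma> z x =
      c \<sigma> z * of_nat a * of_real x ^ (a - 1) * K0
      + c \<sigma> z * (\<sigma> - of_nat j) * 2 / of_real (Im z) * of_real x ^ (a + 1) * K1
      + (- (c \<sigma> z * (\<sigma> - of_nat j) * 2 * of_real (Re z) / of_real (Im z))) * of_real x ^ a * K1"
    by (simp add: e K0_def K1_def)
  have "Im z \<noteq> 0" using assms by simp
  hence "c \<sigma> z * (of_real x ^ a * ((\<sigma> - of_nat j) * of_real (2 * (x - Re z) / Im z) * K1) +
       of_nat a * of_real x ^ (a - 1) * K0) = kterms_eval (kterms_xderiv [e]) \<sigma> z x"
    unfolding ev by (simp add: field_simps)
  ultimately have "((\<lambda>y. c \<sigma> z * of_real y ^ a * kern (\<sigma> - of_nat j) z y) has_vector_derivative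
     kterms_eval (kterms_xderiv [e]) \<sigma> z x) (at x)"
    by (simp add: mult.assoc)
  from has_vector_derivative_add[OF this Cons.IH]
  have H: "((\<lambda>y. c \<sigma> z * of_real y ^ a * kern (\<sigma> - of_nat j) z y + kterms_eval Ls \<sigma> z y)
      has_vector_derivative kterms_eval (kterms_xderiv [e]) \<sigma> z x + kterms_eval (kterms_xderiv Ls) \<sigma> z x)
      (at x)" .
  have 1: "kterms_eval (kterms_xderiv (e # Ls)) \<sigma> z x =
      kterms_eval (kterms_xderiv [e]) \<sigma> z x + kterms_eval (kterms_xderiv Ls) \<sigma> z x"
    by (simp add: e)
  have 2: "(\<lambda>y. kterms_eval (e # Ls) \<sigma> z y) =
      (\<lambda>y. c \<sigma> z * of_real y ^ a * kern (\<sigma> - of_nat j) z y + kterms_eval Ls \<sigma> z y)"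
    by (simp add: e)
  show ?case unfolding 1 2 by (rule H)
qed simp

lemma kterms_continuous_xderiv: "kterms_continuous Ls \<Longrightarrow> kterms_continuous (kterms_xderiv Ls)"
proof (induction Ls)
  case (Cons e Ls)
  obtain c a j where e: "e = (c, a, j)" by (cases e)
  have "continuous_on (UNIV \<times> Lam) (\<lambda>p. c (fst p) (snd p))"
    using Cons.prems by (simp add: e case_prod_beta)
  thus ?case
    using Cons by (simp add: e case_prod_beta) (intro conjI continuous_intros; auto)
qed simp

lemma continuous_on_kterms_eval:
  assumes "kterms_continuous Ls"
  shows "continuous_on (UNIV \<times> Lam \<times> UNIV) (\<lambda>(\<sigma>, z, x). kterms_eval Ls \<sigma> z x)"
  using assms
proof (induction Ls)
  case (Cons e Ls)
  obtain c a j where e: "e = (c, a, j)" by (cases e)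
  have "continuous_on (UNIV \<times> Lam) (\<lambda>(\<sigma>, z). c \<sigma> z)" using Cons.prems e by simp
  hence "continuous_on (UNIV \<times> Lam \<times> UNIV) (\<lambda>p. (\<lambda>(\<sigma>, z). c \<sigma> z) (fst p, fst (snd p)))"
    by (rule continuous_on_compose2) (auto intro!: continuous_intros)
  moreover have "continuous_on (UNIV \<times> Lam \<times> UNIV)
      (\<lambda>p. kern (fst p - of_nat j) (fst (snd p)) (snd (snd p)))"
    using continuous_on_kern[of "of_nat j"] by (simp add: case_prod_beta)
  ultimately show ?case
    using Cons e by (simp add: case_prod_beta) (intro continuous_intros; simp)
qed (simp add: case_prod_beta continuous_on_const)

lemma Kern_xderiv_kterms:
  "\<exists>Ls. kterms_continuous Ls \<and> (\<forall>\<sigma> z x. Im z > 0 \<longrightarrow> Kern_xderiv q \<sigma> z x = kterms_eval Ls \<sigma> z x)"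
proof (induction q)
  case 0
  show ?case
    by (rule exI[of _ "[(\<lambda>_ _. 1, 0, 0)]"])
       (auto simp: Kern_xderiv_def xderiv_def Kern_eq_kern continuous_on_const)
next
  case (Suc q)
  then obtain Ls where Ls: "kterms_continuous Ls"
    "\<And>\<sigma> z x. Im z > 0 \<Longrightarrow> Kern_xderiv q \<sigma> z x = kterms_eval Ls \<sigma> z x" by blast
  have "Kern_xderiv (Suc q) \<sigma> z x = kterms_eval (kterms_xderiv Ls) \<sigma> z x" if "Im z > 0" for \<sigma> z x
  proof -
    have "xderiv q (\<lambda>y. Kern \<sigma> z y) = (\<lambda>y. kterms_eval Ls \<sigma> z y)"
      using Ls(2)[OF that] unfolding Kern_xderiv_def by auto
    thus ?thesis
      unfolding Kern_xderiv_def xderiv_Suc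
      using vector_derivative_at[OF kterms_eval_has_vector_derivative[OF that]] by simp
  qed
  thus ?case using kterms_continuous_xderiv[OF Ls(1)] by blast
qed

lemma Kern_xderiv_has_vector_derivative:
  assumes "Im z > 0"
  shows "((\<lambda>y. Kern_xderiv q \<sigma> z y) has_vector_derivative Kern_xderiv (Suc q) \<sigma> z x) (at x)"
proof -
  obtain Ls where "\<And>\<sigma> z x. Im z > 0 \<Longrightarrow> Kern_xderiv q \<sigma> z x = kterms_eval Ls \<sigma> z x"
    using Kern_xderiv_kterms[of q] by blast
  hence eq: "(\<lambda>y. Kern_xderiv q \<sigma> z y) = (\<lambda>y. kterms_eval Ls \<sigma> z y)"
    using assms by auto
  have "Kern_xderiv (Suc q) \<sigma> z x = vector_derivative (\<lambda>y. Kern_xderiv q \<sigma> z y) (at x)"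
    by (simp add: Kern_xderiv_def xderiv_Suc eta_contract_eq)
  thus ?thesis
    unfolding eq using kterms_eval_has_vector_derivative[OF assms] vector_derivative_at by metis
qed

lemma continuous_on_Kern_xderiv:
  "continuous_on (UNIV \<times> Lam \<times> UNIV) (\<lambda>(\<sigma>, z, x). Kern_xderiv q \<sigma> z x)"
proof -
  obtain Ls where Ls: "kterms_continuous Ls"
    "\<And>\<sigma> z x. Im z > 0 \<Longrightarrow> Kern_xderiv q \<sigma> z x = kterms_eval Ls \<sigma> z x"
    using Kern_xderiv_kterms[of q] by blast
  show ?thesis
    by (rule continuous_on_cong[THEN iffD1, OF refl _ continuous_on_kterms_eval[OF Ls(1)]])
       (auto simp: Ls(2))
qed

lemma test_funE:
  assumes "test_fun g"
  obtains C where "compact C" "C \<subseteq> Lam" "\<And>z. z \<notin> C \<Longrightarrow> g z = 0"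
  using assms unfolding test_fun_def by blast

lemma test_fun_eq_0_off_Lam: "test_fun g \<Longrightarrow> \<not> Im z > 0 \<Longrightarrow> g z = 0"
  unfolding test_fun_def by auto

lemma continuous_on_UNIV_vanishing_outside:
  fixes F :: "'a::t2_space \<Rightarrow> 'b::real_normed_vector"
  assumes "open S" "compact C" "C \<subseteq> S" "continuous_on S F" "\<And>z. z \<notin> C \<Longrightarrow> F z = 0"
  shows "continuous_on UNIV F"
proof -
  have "continuous_on (-C) F"
    by (rule continuous_on_eq[OF continuous_on_const[of _ 0]]) (use assms(5) in auto)
  moreover have "open (-C)" using assms(2) compact_imp_closed by blast
  ultimately have "continuous_on (S \<union> -C) F"
    using continuous_on_open_Un assms(1,4) by blast
  moreover have "S \<union> -C = UNIV" using assms(3) by blast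
  ultimately show ?thesis by simp
qed

lemma continuous_on_mult_vanishing_outside:
  fixes \<Phi> :: "'a::topological_space \<Rightarrow> complex \<Rightarrow> complex"
  assumes "compact C" "C \<subseteq> Lam" "continuous_on (UNIV \<times> Lam) (\<lambda>(x,z). \<Phi> x z)"
    "continuous_on UNIV h" "\<And>z. z \<notin> C \<Longrightarrow> h z = 0"
  shows "continuous_on UNIV (\<lambda>(x,z). \<Phi> x z * h z)"
proof -
  have h': "continuous_on (UNIV \<times> Lam) (\<lambda>p. h (snd p))"
    by (rule continuous_on_compose2[OF assms(4)]) (auto intro!: continuous_intros)
  have "continuous_on (UNIV \<times> Lam) (\<lambda>p. (\<lambda>(x,z). \<Phi> x z) p * h (snd p))"
    by (intro continuous_intros assms(3) h')
  hence 1: "continuous_on (UNIV \<times> Lam) (\<lambda>(x,z). \<Phi> x z * h z)"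
    by (simp add: case_prod_beta)
  have 2: "continuous_on (UNIV \<times> (-C)) (\<lambda>(x,z). \<Phi> x z * h z)"
    by (rule continuous_on_eq[OF continuous_on_const[of _ 0]]) (use assms(5) in auto)
  have o1: "open (UNIV \<times> Lam :: ('a \<times> complex) set)" by (intro open_Times open_Lam open_UNIV)
  have o2: "open (UNIV \<times> (-C) :: ('a \<times> complex) set)"
    using assms(1) compact_imp_closed by (intro open_Times open_UNIV) auto
  have "continuous_on ((UNIV \<times> Lam) \<union> (UNIV \<times> (-C))) (\<lambda>(x,z). \<Phi> x z * h z)"
    using continuous_on_open_Un[OF o1 o2 1 2] .
  moreover have "(UNIV \<times> Lam) \<union> (UNIV \<times> (-C)) = (UNIV :: ('a \<times> complex) set)"
    using assms(2) by auto
  ultimately show ?thesis by simp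
qed

lemma continuous_on_test_fun:
  assumes "test_fun g" shows "continuous_on UNIV g"
proof -
  obtain C where C: "compact C" "C \<subseteq> Lam" "\<And>z. z \<notin> C \<Longrightarrow> g z = 0"
    using test_funE[OF assms] by blast
  have "\<forall>z\<in>Lam. g differentiable (at z)"
    using assms unfolding test_fun_def smooth_on_def
    by (metis pdirs.simps(1))
  hence "continuous_on Lam g"
    by (intro continuous_at_imp_continuous_on) (auto intro: differentiable_imp_continuous_within)
  thus ?thesis by (rule continuous_on_UNIV_vanishing_outside[OF open_Lam C(1,2)]) (rule C(3))
qed

lemma frechet_derivative_cong_open:
  assumes "open U" "z \<in> U" "\<And>y. y \<in> U \<Longrightarrow> f y = g y"
  shows "frechet_derivative f (at z) = frechet_derivative g (at z)"
proof -
  have "(f has_derivative D) (at z) \<longleftrightarrow> (g has_derivative D) (at z)" for D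
    using has_derivative_transform_within_open[of f D z UNIV U g]
          has_derivative_transform_within_open[of g D z UNIV U f] assms by auto
  thus ?thesis unfolding frechet_derivative_def by simp
qed

lemma differentiable_cong_open:
  assumes "open U" "z \<in> U" "\<And>y. y \<in> U \<Longrightarrow> f y = g y" "f differentiable (at z)"
  shows "g differentiable (at z)"
  using assms has_derivative_transform_within_open[of f _ z UNIV U g] unfolding differentiable_def
  by blast

lemma pdirs_cong_open:
  assumes "open U" "\<And>y. y \<in> U \<Longrightarrow> f y = g y" "z \<in> U"
  shows "pdirs vs f z = pdirs vs g z"
  using assms(3)
proof (induction vs arbitrary: z)
  case Nil thus ?case using assms(2) by simp
next
  case (Cons v vs)
  have "frechet_derivative (pdirs vs f) (at z) = frechet_derivative (pdirs vs g) (at z)"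
    by (rule frechet_derivative_cong_open[OF assms(1) Cons.prems]) (rule Cons.IH)
  thus ?case by simp
qed

lemma smooth_on_cong:
  assumes "open U" "\<And>y. y \<in> U \<Longrightarrow> f y = g y" "smooth_on U f"
  shows "smooth_on U g"
  unfolding smooth_on_def
proof (intro allI ballI)
  fix vs z assume z: "z \<in> U"
  have "pdirs vs f differentiable (at z)" using assms(3) z unfolding smooth_on_def by blast
  thus "pdirs vs g differentiable (at z)"
    by (rule differentiable_cong_open[OF assms(1) z, rotated]) (rule pdirs_cong_open[OF assms(1,2)])
qed

lemma smooth_on_subset: "smooth_on U f \<Longrightarrow> V \<subseteq> U \<Longrightarrow> smooth_on V f"
  unfolding smooth_on_def by blast

lemma frechet_derivative_apply:
  assumes "(f has_derivative D) (at z)" shows "frechet_derivative f (at z) v = D v"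
  using frechet_derivative_at[OF assms] by simp

lemma smooth_on_add:
  assumes U: "open U" and f: "smooth_on U f" and g: "smooth_on U g"
  shows "smooth_on U (\<lambda>z. f z + g z)"
proof -
  have rep: "pdirs vs (\<lambda>z. f z + g z) z = pdirs vs f z + pdirs vs g z" if "z \<in> U" for vs z
    using that
  proof (induction vs arbitrary: z)
    case Nil thus ?case by simp
  next
    case (Cons v vs)
    have "frechet_derivative (pdirs vs (\<lambda>z. f z + g z)) (at z) =
        frechet_derivative (\<lambda>y. pdirs vs f y + pdirs vs g y) (at z)"
      by (rule frechet_derivative_cong_open[OF U Cons.prems]) (rule Cons.IH)
    moreover have "((\<lambda>y. pdirs vs f y + pdirs vs g y) has_derivative
        (\<lambda>h. frechet_derivative (pdirs vs f) (at z) h + frechet_derivative (pdirs vs g) (at z) h)) (at z)"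
      using f g Cons.prems unfolding smooth_on_def frechet_derivative_works
      by (intro has_derivative_add) auto
    ultimately show ?case by (simp add: frechet_derivative_apply)
  qed
  show ?thesis unfolding smooth_on_def
  proof (intro allI ballI)
    fix vs z assume z: "z \<in> U"
    have "(\<lambda>y. pdirs vs f y + pdirs vs g y) differentiable (at z)"
      using f g z unfolding smooth_on_def by (intro differentiable_add) auto
    thus "pdirs vs (\<lambda>z. f z + g z) differentiable (at z)"
      by (rule differentiable_cong_open[OF U z, rotated]) (simp add: rep)
  qed
qed

text \<open>Iterated derivatives of a product are sums of products of iterated derivatives of the factors.\<close>
type_synonym leibniz_terms = "(complex \<times> complex list \<times> complex list) list"

definition leibniz_sum ::
  "(complex \<Rightarrow> complex) \<Rightarrow> (complex \<Rightarrow> complex) \<Rightarrow> leibniz_terms \<Rightarrow> complex \<Rightarrow> complex" where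
  "leibniz_sum f g P z = (\<Sum>(c, as, bs)\<leftarrow>P. c * pdirs as f z * pdirs bs g z)"

definition leibniz_step :: "complex \<Rightarrow> leibniz_terms \<Rightarrow> leibniz_terms" where
  "leibniz_step v P = concat (map (\<lambda>(c, as, bs). [(c, v # as, bs), (c, as, v # bs)]) P)"

lemma leibniz_sum_Nil [simp]: "leibniz_sum f g [] z = 0"
  by (simp add: leibniz_sum_def)

lemma leibniz_sum_Cons [simp]:
  "leibniz_sum f g ((c, as, bs) # P) z = c * pdirs as f z * pdirs bs g z + leibniz_sum f g P z"
  by (simp add: leibniz_sum_def)

lemma leibniz_step_Nil [simp]: "leibniz_step v [] = []"
  by (simp add: leibniz_step_def)

lemma leibniz_step_Cons [simp]:
  "leibniz_step v ((c, as, bs) # P) = (c, v # as, bs) # (c, as, v # bs) # leibniz_step v P"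
  by (simp add: leibniz_step_def)

lemma leibniz_sum_has_derivative:
  assumes f: "smooth_on U f" and g: "smooth_on U g" and z: "z \<in> U"
  shows "((\<lambda>y. leibniz_sum f g P y) has_derivative (\<lambda>v. leibniz_sum f g (leibniz_step v P) z)) (at z)"
proof (induction P)
  case Nil thus ?case by simp
next
  case (Cons e P)
  obtain c as bs where e: "e = (c, as, bs)" by (cases e)
  have df: "(pdirs as f has_derivative (\<lambda>v. pdirs (v # as) f z)) (at z)"
    using f z unfolding smooth_on_def frechet_derivative_works by simp
  have dg: "(pdirs bs g has_derivative (\<lambda>v. pdirs (v # bs) g z)) (at z)"
    using g z unfolding smooth_on_def frechet_derivative_works by simp
  have "((\<lambda>y. c * (pdirs as f y * pdirs bs g y) + leibniz_sum f g P y) has_derivative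
      (\<lambda>v. c * (pdirs as f z * pdirs (v # bs) g z + pdirs (v # as) f z * pdirs bs g z)
        + leibniz_sum f g (leibniz_step v P) z)) (at z)"
    by (intro has_derivative_add has_derivative_mult_right has_derivative_mult df dg Cons.IH)
  thus ?case by (simp add: e algebra_simps)
qed

lemma smooth_on_mult:
  assumes U: "open U" and f: "smooth_on U f" and g: "smooth_on U g"
  shows "smooth_on U (\<lambda>z. f z * g z)"
proof -
  have rep: "\<exists>P. \<forall>z\<in>U. pdirs vs (\<lambda>z. f z * g z) z = leibniz_sum f g P z" for vs
  proof (induction vs)
    case Nil
    show ?case by (rule exI[of _ "[(1,[],[])]"]) simp
  next
    case (Cons v vs)
    then obtain P where P: "\<forall>z\<in>U. pdirs vs (\<lambda>z. f z * g z) z = leibniz_sum f g P z" by blast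
    show ?case
    proof (intro exI ballI)
      fix z assume z: "z \<in> U"
      have "frechet_derivative (pdirs vs (\<lambda>z. f z * g z)) (at z) =
          frechet_derivative (leibniz_sum f g P) (at z)"
        by (rule frechet_derivative_cong_open[OF U z]) (use P in auto)
      thus "pdirs (v # vs) (\<lambda>z. f z * g z) z = leibniz_sum f g (leibniz_step v P) z"
        using frechet_derivative_apply[OF leibniz_sum_has_derivative[OF f g z, of P]] by simp
    qed
  qed
  show ?thesis unfolding smooth_on_def
  proof (intro allI ballI)
    fix vs z assume z: "z \<in> U"
    obtain P where P: "\<forall>z\<in>U. pdirs vs (\<lambda>z. f z * g z) z = leibniz_sum f g P z" using rep by blast
    have "leibniz_sum f g P differentiable (at z)"
      using leibniz_sum_has_derivative[OF f g z] unfolding differentiable_def by blast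
    thus "pdirs vs (\<lambda>z. f z * g z) differentiable (at z)"
      by (rule differentiable_cong_open[OF U z, rotated]) (use P in auto)
  qed
qed

lemma pdirs_append_single: "pdirs vs (pdirs [v] f) = pdirs (vs @ [v]) f"
  by (induction vs) auto

lemma smooth_on_pdirs: "smooth_on U f \<Longrightarrow> smooth_on U (pdirs [v] f)"
  unfolding smooth_on_def pdirs_append_single by blast

lemma smooth_on_linear:
  assumes "\<And>z. (f has_derivative L) (at z)"
  shows "smooth_on U f"
proof -
  have c: "vs \<noteq> [] \<Longrightarrow> \<exists>c. pdirs vs f = (\<lambda>z. c)" for vs
  proof (induction vs)
    case Nil thus ?case by simp
  next
    case (Cons v vs)
    show ?case
    proof (cases "vs = []")
      case True
      have "pdirs [v] f = (\<lambda>z. L v)"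
        using frechet_derivative_apply[OF assms] by (auto simp: fun_eq_iff)
      thus ?thesis using True by auto
    next
      case False
      then obtain c where ce: "pdirs vs f = (\<lambda>z. c)" using Cons.IH by blast
      have "pdirs (v # vs) f = (\<lambda>z. frechet_derivative (\<lambda>z. c) (at z) v)"
        by (simp only: pdirs.simps ce)
      hence "pdirs (v # vs) f = (\<lambda>z. 0)"
        using frechet_derivative_apply[OF has_derivative_const[of c]] by (auto simp: fun_eq_iff)
      thus ?thesis by blast
    qed
  qed
  show ?thesis unfolding smooth_on_def
  proof (intro allI ballI)
    fix vs z
    show "pdirs vs f differentiable (at z)"
    proof (cases "vs = []")
      case True thus ?thesis using assms unfolding differentiable_def by auto
    next
      case False then obtain c where "pdirs vs f = (\<lambda>z. c)" using c by blast
      thus ?thesis by simp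
    qed
  qed
qed

lemma smooth_on_const: "smooth_on U (\<lambda>z. c)"
  by (rule smooth_on_linear[of _ "\<lambda>h. 0"]) simp
lemma smooth_on_id: "smooth_on U (\<lambda>z. z)"
  by (rule smooth_on_linear[of _ "\<lambda>h. h"]) simp
lemma smooth_on_cnj: "smooth_on U (\<lambda>z. cnj z)"
  by (rule smooth_on_linear[of _ "\<lambda>h. cnj h"]) simp

lemma has_derivative_divide_Im_power:
  fixes c :: complex
  assumes "Im z > 0"
  shows "((\<lambda>y. c / of_real (Im y) ^ m) has_derivative
           (\<lambda>h. - (c * of_nat m * of_real (Im h)) / of_real (Im z) ^ Suc m)) (at z)"
proof -
  have nz: "(of_real (Im z) :: complex) \<noteq> 0" using assms by simp
  have "((\<lambda>y. c / of_real (Im y) ^ m) has_derivative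
      (\<lambda>h. (0 * of_real (Im z) ^ m - c * (of_nat m * of_real (Im h) * of_real (Im z) ^ (m - 1)))
          / (of_real (Im z) ^ m * of_real (Im z) ^ m))) (at z)"
    by (intro has_derivative_divide' has_derivative_const has_derivative_power
        has_derivative_of_real has_derivative_Im has_derivative_ident) (use assms in simp)
  moreover have "(\<lambda>h. (0 * of_real (Im z) ^ m - c * (of_nat m * of_real (Im h) * of_real (Im z) ^ (m - 1)))
          / (of_real (Im z) ^ m * of_real (Im z) ^ m)) =
      (\<lambda>h. - (c * of_nat m * of_real (Im h)) / of_real (Im z) ^ Suc m)"
  proof (cases m)
    case 0 thus ?thesis by simp
  next
    case (Suc k) thus ?thesis using nz by (auto simp: fun_eq_iff field_simps)
  qed
  ultimately show ?thesis by simp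
qed

lemma smooth_on_divide_Im_power: "smooth_on Lam (\<lambda>z. (c::complex) / of_real (Im z) ^ m)"
proof -
  have rep: "\<exists>c m. \<forall>z\<in>Lam. pdirs vs (\<lambda>z. c0 / of_real (Im z) ^ m0) z = c / of_real (Im z) ^ m"
    for vs c0 m0
  proof (induction vs)
    case (Cons v vs)
    then obtain c m
      where P: "\<forall>z\<in>Lam. pdirs vs (\<lambda>z. c0 / of_real (Im z) ^ m0) z = c / of_real (Im z) ^ m"
      by blast
    show ?case
    proof (intro exI ballI)
      fix z assume z: "z \<in> Lam"
      have "frechet_derivative (pdirs vs (\<lambda>z. c0 / of_real (Im z) ^ m0)) (at z) =
          frechet_derivative (\<lambda>y. c / of_real (Im y) ^ m) (at z)"
        by (rule frechet_derivative_cong_open[OF open_Lam z]) (use P in auto)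
      thus "pdirs (v # vs) (\<lambda>z. c0 / of_real (Im z) ^ m0) z =
          - (c * of_nat m * of_real (Im v)) / of_real (Im z) ^ Suc m"
        using frechet_derivative_apply[OF has_derivative_divide_Im_power, of z c m v] z by simp
    qed
  qed auto
  show ?thesis
    unfolding smooth_on_def
  proof (intro allI ballI)
    fix vs z assume z: "z \<in> Lam"
    obtain c' m' where P: "\<forall>z\<in>Lam. pdirs vs (\<lambda>z. c / of_real (Im z) ^ m) z = c' / of_real (Im z) ^ m'"
      using rep by blast
    have "(\<lambda>y. c' / of_real (Im y) ^ m') differentiable (at z)"
      using has_derivative_divide_Im_power[of z c' m'] z unfolding differentiable_def by auto
    thus "pdirs vs (\<lambda>z. c / of_real (Im z) ^ m) differentiable (at z)"
      by (rule differentiable_cong_open[OF open_Lam z, rotated]) (use P in auto)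
  qed
qed

lemma test_fun_mult:
  assumes "smooth_on Lam V" "test_fun g" shows "test_fun (\<lambda>z. V z * g z)"
proof -
  obtain C where C: "compact C" "C \<subseteq> Lam" "\<And>z. z \<notin> C \<Longrightarrow> g z = 0"
    using test_funE[OF assms(2)] by blast
  have "smooth_on Lam g" using assms(2) unfolding test_fun_def by blast
  thus ?thesis unfolding test_fun_def using C smooth_on_mult[OF open_Lam assms(1)] by auto
qed

lemma test_fun_add:
  assumes "test_fun f" "test_fun g" shows "test_fun (\<lambda>z. f z + g z)"
proof -
  obtain C where C: "compact C" "C \<subseteq> Lam" "\<And>z. z \<notin> C \<Longrightarrow> f z = 0"
    using test_funE[OF assms(1)] by blast
  obtain D where D: "compact D" "D \<subseteq> Lam" "\<And>z. z \<notin> D \<Longrightarrow> g z = 0"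
    using test_funE[OF assms(2)] by blast
  have "smooth_on Lam f" "smooth_on Lam g" using assms unfolding test_fun_def by blast+
  hence "smooth_on Lam (\<lambda>z. f z + g z)" using smooth_on_add[OF open_Lam] by blast
  moreover have "compact (C \<union> D)" "C \<union> D \<subseteq> Lam" using C D by auto
  moreover have "\<forall>z. z \<notin> C \<union> D \<longrightarrow> f z + g z = 0" using C D by auto
  ultimately show ?thesis unfolding test_fun_def by blast
qed

lemma test_fun_zero: "test_fun (\<lambda>z. 0)"
  unfolding test_fun_def using smooth_on_const[of Lam 0] by (auto intro!: exI[of _ "{}"])

lemma test_fun_sum: "finite I \<Longrightarrow> (\<And>i. i \<in> I \<Longrightarrow> test_fun (f i)) \<Longrightarrow> test_fun (\<lambda>z. \<Sum>i\<in>I. f i z)"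
  by (induction I rule: finite_induct) (auto intro: test_fun_add test_fun_zero)

lemma test_fun_cmult: "test_fun g \<Longrightarrow> test_fun (\<lambda>z. c * g z)"
  using test_fun_mult[OF smooth_on_const] .

lemma frechet_derivative_zero_outside:
  fixes g :: "complex \<Rightarrow> complex"
  assumes "compact C" "\<And>z. z \<notin> C \<Longrightarrow> g z = 0" "z \<notin> C"
  shows "frechet_derivative g (at z) = (\<lambda>h. 0)"
proof -
  have "open (-C)" using assms(1) compact_imp_closed by blast
  hence "frechet_derivative g (at z) = frechet_derivative (\<lambda>y. 0::complex) (at z)"
    by (rule frechet_derivative_cong_open) (use assms in auto)
  thus ?thesis using frechet_derivative_at[OF has_derivative_const[of "0::complex"]] by simp
qed

lemma Dz_pdirs: "Dz g = (\<lambda>z. (1/2) * pdirs [1] g z + (-\<i>/2) * pdirs [\<i>] g z)"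
  by (auto simp: Dz_def fun_eq_iff field_simps)
lemma Dzb_pdirs: "Dzb g = (\<lambda>z. (1/2) * pdirs [1] g z + (\<i>/2) * pdirs [\<i>] g z)"
  by (auto simp: Dzb_def fun_eq_iff field_simps)

lemma test_fun_pdirs_combination:
  assumes "test_fun g"
  shows "test_fun (\<lambda>z. \<alpha> * pdirs [1] g z + \<beta> * pdirs [\<i>] g z)"
proof -
  obtain C where C: "compact C" "C \<subseteq> Lam" "\<And>z. z \<notin> C \<Longrightarrow> g z = 0"
    using test_funE[OF assms] by blast
  have "smooth_on Lam g" using assms unfolding test_fun_def by blast
  hence "smooth_on Lam (\<lambda>z. \<alpha> * pdirs [1] g z + \<beta> * pdirs [\<i>] g z)"
    by (intro smooth_on_add[OF open_Lam] smooth_on_mult[OF open_Lam] smooth_on_const smooth_on_pdirs)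
  moreover have "\<alpha> * pdirs [1] g z + \<beta> * pdirs [\<i>] g z = 0" if "z \<notin> C" for z
    using frechet_derivative_zero_outside[OF C(1) C(3) that] by simp
  ultimately show ?thesis unfolding test_fun_def using C by blast
qed

lemma test_fun_Dz: "test_fun g \<Longrightarrow> test_fun (Dz g)"
  unfolding Dz_pdirs by (rule test_fun_pdirs_combination)

lemma test_fun_Dzb: "test_fun g \<Longrightarrow> test_fun (Dzb g)"
  unfolding Dzb_pdirs by (rule test_fun_pdirs_combination)

lemma smooth_on_UNIV_power: "smooth_on UNIV (\<lambda>z::complex. z ^ n)"
  by (induction n) (auto intro: smooth_on_mult[OF open_UNIV] smooth_on_const smooth_on_id)
lemma smooth_on_power: "smooth_on U (\<lambda>z::complex. z ^ n)"
  using smooth_on_subset[OF smooth_on_UNIV_power] by blast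
lemma smooth_on_UNIV_cnj_power: "smooth_on UNIV (\<lambda>z::complex. cnj z ^ n)"
  by (induction n) (auto intro: smooth_on_mult[OF open_UNIV] smooth_on_const smooth_on_cnj)
lemma smooth_on_cnj_power: "smooth_on U (\<lambda>z::complex. cnj z ^ n)"
  using smooth_on_subset[OF smooth_on_UNIV_cnj_power] by blast

section \<open>Differentiation of \<open>J\<close> under the integral sign\<close>

lemma continuous_on_Kern_xderiv_x: "continuous_on (UNIV \<times> Lam) (\<lambda>(x, z). Kern_xderiv q \<sigma> z x)"
proof -
  have "continuous_on (UNIV \<times> Lam) (\<lambda>p. (\<lambda>(\<sigma>, z, x). Kern_xderiv q \<sigma> z x) (\<sigma>, snd p, fst p))"
    by (rule continuous_on_compose2[OF continuous_on_Kern_xderiv]) (auto intro!: continuous_intros)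
  thus ?thesis by (simp add: case_prod_beta)
qed

lemma continuous_on_Kern_xderiv_tau: "continuous_on (UNIV \<times> Lam) (\<lambda>(\<sigma>, z). Kern_xderiv q \<sigma> z x)"
proof -
  have "continuous_on (UNIV \<times> Lam) (\<lambda>p. (\<lambda>(\<sigma>, z, x). Kern_xderiv q \<sigma> z x) (fst p, snd p, x))"
    by (rule continuous_on_compose2[OF continuous_on_Kern_xderiv]) (auto intro!: continuous_intros)
  thus ?thesis by (simp add: case_prod_beta)
qed

lemma continuous_on_UNIV_slice:
  assumes "continuous_on UNIV (\<lambda>(x, z). f x z)"
  shows "continuous_on UNIV (f x)"
proof -
  have "continuous_on UNIV (\<lambda>z. (\<lambda>(x, z). f x z) (x, z))"
    by (rule continuous_on_compose2[OF assms]) (auto intro!: continuous_intros)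
  thus ?thesis by (simp add: eta_contract_eq)
qed

definition mu_weighted :: "(complex \<Rightarrow> complex) \<Rightarrow> complex \<Rightarrow> complex" where
  "mu_weighted g z = g z / of_real (4 * (Im z)\<^sup>2)"

lemma J_eq_integral_mu_weighted: "J g \<sigma> x = integral Lam (\<lambda>z. Kern \<sigma> z x * mu_weighted g z)"
  by (simp add: J_def mu_weighted_def)

lemma continuous_on_mu_weighted:
  assumes "test_fun g"
  shows "continuous_on UNIV (mu_weighted g)"
proof -
  obtain C where C: "compact C" "C \<subseteq> Lam" "\<And>z. z \<notin> C \<Longrightarrow> g z = 0"
    using test_funE[OF assms] by blast
  have "continuous_on Lam (mu_weighted g)"
    unfolding mu_weighted_def
    by (intro continuous_intros continuous_on_subset[OF continuous_on_test_fun[OF assms]]) auto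
  thus ?thesis
    by (rule continuous_on_UNIV_vanishing_outside[OF open_Lam C(1,2)]) (simp add: mu_weighted_def C(3))
qed

lemma has_integral_Lam_cbox:
  fixes G :: "complex \<Rightarrow> complex"
  assumes "C \<subseteq> Lam" "C \<subseteq> cbox a b" "continuous_on UNIV G" "\<And>z. z \<notin> C \<Longrightarrow> G z = 0"
  shows "(G has_integral integral (cbox a b) G) Lam"
proof -
  have "G integrable_on cbox a b"
    by (rule integrable_continuous[OF continuous_on_subset[OF assms(3)]]) auto
  hence "(G has_integral integral (cbox a b) G) UNIV"
    by (rule has_integral_on_superset[OF integrable_integral]) (use assms(2,4) in auto)
  moreover have "(\<lambda>x. if x \<in> Lam then G x else 0) = G"
    by (rule ext) (use assms(1,4) in force)
  ultimately show ?thesis using has_integral_restrict_UNIV[of Lam G] by simp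
qed

lemma Kern_xderiv_mu_weighted_has_vector_derivative:
  assumes "test_fun g"
  shows "((\<lambda>x. Kern_xderiv q \<sigma> z x * mu_weighted g z) has_vector_derivative
           Kern_xderiv (Suc q) \<sigma> z x * mu_weighted g z) (at x)"
proof (cases "Im z > 0")
  case True
  thus ?thesis by (intro has_vector_derivative_mult_left Kern_xderiv_has_vector_derivative)
next
  case False
  hence "g z = 0" using test_fun_eq_0_off_Lam[OF assms] by blast
  thus ?thesis by (simp add: mu_weighted_def)
qed

lemma cbox_integral_Kern_xderiv_has_vector_derivative:
  assumes g: "test_fun g"
  shows "((\<lambda>x. integral (cbox a b) (\<lambda>z. Kern_xderiv q \<sigma> z x * mu_weighted g z)) has_vector_derivative
           integral (cbox a b) (\<lambda>z. Kern_xderiv (Suc q) \<sigma> z x * mu_weighted g z)) (at x)"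
proof -
  obtain C where C: "compact C" "C \<subseteq> Lam" "\<And>z. z \<notin> C \<Longrightarrow> g z = 0"
    using test_funE[OF g] by blast
  have cont: "continuous_on UNIV (\<lambda>(x, z). Kern_xderiv q \<sigma> z x * mu_weighted g z)" for q
    by (rule continuous_on_mult_vanishing_outside[OF C(1,2) continuous_on_Kern_xderiv_x
          continuous_on_mu_weighted[OF g]]) (simp add: mu_weighted_def C(3))
  have "((\<lambda>x. integral (cbox a b) (\<lambda>z. Kern_xderiv q \<sigma> z x * mu_weighted g z)) has_vector_derivative
      integral (cbox a b) (\<lambda>z. Kern_xderiv (Suc q) \<sigma> z x * mu_weighted g z)) (at x within UNIV)"
  proof (rule leibniz_rule_vector_derivative)
    fix x :: real
    show "(\<lambda>z. Kern_xderiv q \<sigma> z x * mu_weighted g z) integrable_on cbox a b"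
      by (rule integrable_continuous continuous_on_subset[OF continuous_on_UNIV_slice[OF cont]])+ simp
  qed (auto intro: Kern_xderiv_mu_weighted_has_vector_derivative[OF g]
            continuous_on_subset[OF cont[of "Suc q"]])
  thus ?thesis by simp
qed

lemma J_xderiv_eq_cbox_integral:
  assumes g: "test_fun g"
  obtains a where
    "\<And>q \<sigma> x. ((\<lambda>z. Kern_xderiv q \<sigma> z x * mu_weighted g z) has_integral
        integral (cbox (-a) a) (\<lambda>z. Kern_xderiv q \<sigma> z x * mu_weighted g z)) Lam"
    "\<And>q \<sigma>. xderiv q (J g \<sigma>) = (\<lambda>x. integral (cbox (-a) a) (\<lambda>z. Kern_xderiv q \<sigma> z x * mu_weighted g z))"
proof -
  obtain C where C: "compact C" "C \<subseteq> Lam" "\<And>z. z \<notin> C \<Longrightarrow> g z = 0"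
    using test_funE[OF g] by blast
  obtain a where a: "C \<subseteq> cbox (-a) a"
    using bounded_subset_cbox_symmetric[OF compact_imp_bounded[OF C(1)]] by blast
  have I: "((\<lambda>z. Kern_xderiv q \<sigma> z x * mu_weighted g z) has_integral
        integral (cbox (-a) a) (\<lambda>z. Kern_xderiv q \<sigma> z x * mu_weighted g z)) Lam" for q \<sigma> x
  proof (rule has_integral_Lam_cbox[OF C(2) a])
    have "continuous_on UNIV (\<lambda>(x, z). Kern_xderiv q \<sigma> z x * mu_weighted g z)"
      by (rule continuous_on_mult_vanishing_outside[OF C(1,2) continuous_on_Kern_xderiv_x
            continuous_on_mu_weighted[OF g]]) (simp add: mu_weighted_def C(3))
    thus "continuous_on UNIV (\<lambda>z. Kern_xderiv q \<sigma> z x * mu_weighted g z)"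
      by (rule continuous_on_UNIV_slice)
  qed (simp add: mu_weighted_def C(3))
  have "xderiv q (J g \<sigma>) = (\<lambda>x. integral (cbox (-a) a) (\<lambda>z. Kern_xderiv q \<sigma> z x * mu_weighted g z))"
    for q \<sigma>
  proof (induction q)
    case 0
    show ?case
      using I[of 0] by (auto simp: xderiv_def J_eq_integral_mu_weighted Kern_xderiv_def integral_unique)
  next
    case (Suc q)
    show ?case
      using vector_derivative_at[OF cbox_integral_Kern_xderiv_has_vector_derivative[OF g]]
      by (simp add: xderiv_Suc Suc.IH)
  qed
  with I show ?thesis using that by blast
qed

lemma J_xderiv_has_integral:
  assumes "test_fun g"
  shows "((\<lambda>z. Kern_xderiv q \<sigma> z x * mu_weighted g z) has_integral xderiv q (J g \<sigma>) x) Lam"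
  using J_xderiv_eq_cbox_integral[OF assms] by metis

lemma J_has_integral:
  assumes "test_fun g"
  shows "((\<lambda>z. Kern \<sigma> z x * g z / of_real (4 * (Im z)\<^sup>2)) has_integral J g \<sigma> x) Lam"
  using J_xderiv_has_integral[OF assms, of 0]
  by (simp add: Kern_xderiv_def xderiv_def mu_weighted_def)

lemma xsmooth_J:
  assumes "test_fun g"
  shows "xsmooth (J g \<sigma>)"
  unfolding xsmooth_def
proof (intro allI)
  fix q x
  obtain a where "\<And>q. xderiv q (J g \<sigma>) =
      (\<lambda>x. integral (cbox (-a) a) (\<lambda>z. Kern_xderiv q \<sigma> z x * mu_weighted g z))"
    using J_xderiv_eq_cbox_integral[OF assms] by metis
  thus "(xderiv q (J g \<sigma>) has_vector_derivative xderiv (Suc q) (J g \<sigma>) x) (at x)"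
    using cbox_integral_Kern_xderiv_has_vector_derivative[OF assms] by simp
qed

lemma continuous_on_J_xderiv:
  assumes g: "test_fun g"
  shows "continuous_on UNIV (\<lambda>\<sigma>. xderiv q (J g \<sigma>) x)"
proof -
  obtain C where C: "compact C" "C \<subseteq> Lam" "\<And>z. z \<notin> C \<Longrightarrow> g z = 0"
    using test_funE[OF g] by blast
  obtain a where "\<And>\<sigma>. xderiv q (J g \<sigma>) =
      (\<lambda>x. integral (cbox (-a) a) (\<lambda>z. Kern_xderiv q \<sigma> z x * mu_weighted g z))"
    using J_xderiv_eq_cbox_integral[OF g] by metis
  moreover have "continuous_on UNIV (\<lambda>(\<sigma>, z). Kern_xderiv q \<sigma> z x * mu_weighted g z)"
    by (rule continuous_on_mult_vanishing_outside[OF C(1,2) continuous_on_Kern_xderiv_tau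
          continuous_on_mu_weighted[OF g]]) (simp add: mu_weighted_def C(3))
  ultimately show ?thesis
    by (simp add: integral_continuous_on_param continuous_on_subset)
qed

lemma J_add:
  assumes "test_fun f" "test_fun g"
  shows "J (\<lambda>z. f z + g z) \<tau> x = J f \<tau> x + J g \<tau> x"
  using has_integral_add[OF J_has_integral[OF assms(1)] J_has_integral[OF assms(2)]]
  by (simp add: J_def algebra_simps add_divide_distrib integral_unique)

lemma J_cmult: "J (\<lambda>z. c * f z) \<tau> x = c * J f \<tau> x"
  unfolding J_def
  by (simp add: mult.left_commute[of _ c] times_divide_eq_right[symmetric] integral_mult_right
           del: times_divide_eq_right)

lemma J_sum:
  "finite I \<Longrightarrow> (\<And>i. i \<in> I \<Longrightarrow> test_fun (h i)) \<Longrightarrow>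
     J (\<lambda>z. \<Sum>i\<in>I. h i z) \<tau> x = (\<Sum>i\<in>I. J (h i) \<tau> x)"
proof (induction I rule: finite_induct)
  case empty
  show ?case by (simp add: J_def)
next
  case (insert i I)
  have "test_fun (\<lambda>z. \<Sum>i\<in>I. h i z)" using insert by (intro test_fun_sum) auto
  thus ?case using insert J_add[of "h i" "\<lambda>z. \<Sum>i\<in>I. h i z"] by (simp add: eta_contract_eq)
qed

lemma J_repr_comp:
  assumes F: "J_repr F" and T: "J_repr (\<lambda>g. J (T g))" "\<And>g. test_fun g \<Longrightarrow> test_fun (T g)"
  shows "J_repr (\<lambda>g. F (T g))"
proof -
  obtain L1 where L1: "rat_sdop L1"
    "\<And>g \<tau> x. test_fun g \<Longrightarrow> \<tau> \<notin> half_ints \<Longrightarrow> F g \<tau> x = sdop_apply L1 (J g) \<tau> x"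
    using F unfolding J_repr_def by blast
  obtain L2 where L2: "rat_sdop L2"
    "\<And>g \<tau> x. test_fun g \<Longrightarrow> \<tau> \<notin> half_ints \<Longrightarrow> J (T g) \<tau> x = sdop_apply L2 (J g) \<tau> x"
    using T(1) unfolding J_repr_def by blast
  show ?thesis
    unfolding J_repr_def
  proof (intro exI conjI allI impI)
    show "rat_sdop (sdop_comp L1 L2)" using L1(1) L2(1) by (rule rat_sdop_comp)
    fix g \<tau> x assume g: "test_fun g" and \<tau>: "\<tau> \<notin> half_ints"
    have "F (T g) \<tau> x = sdop_apply L1 (J (T g)) \<tau> x"
      using L1(2)[OF T(2)[OF g] \<tau>] .
    also have "\<dots> = sdop_apply L1 (\<lambda>\<sigma> y. sdop_apply L2 (J g) \<sigma> y) \<tau> x"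
      by (rule sdop_apply_cong) (use \<tau> L2(2)[OF g] in auto)
    also have "\<dots> = sdop_apply (sdop_comp L1 L2) (J g) \<tau> x"
      using sdop_apply_comp xsmooth_J[OF g] by blast
    finally show "F (T g) \<tau> x = sdop_apply (sdop_comp L1 L2) (J g) \<tau> x" .
  qed
qed

section \<open>Multipliers\<close>

definition J_multiplier :: "(complex \<Rightarrow> complex) \<Rightarrow> bool" where
  "J_multiplier V \<longleftrightarrow>
     (\<forall>g. test_fun g \<longrightarrow> test_fun (\<lambda>z. V z * g z)) \<and> J_repr (\<lambda>g. J (\<lambda>z. V z * g z))"

lemma J_multiplierI: "smooth_on Lam V \<Longrightarrow> J_repr (\<lambda>g. J (\<lambda>z. V z * g z)) \<Longrightarrow> J_multiplier V"
  unfolding J_multiplier_def using test_fun_mult by blast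

lemma J_multiplier_mult:
  assumes "J_multiplier V" "J_multiplier W"
  shows "J_multiplier (\<lambda>z. V z * W z)"
proof -
  have W: "test_fun (\<lambda>z. W z * g z)" if "test_fun g" for g
    using assms(2) that unfolding J_multiplier_def by blast
  have "J_repr (\<lambda>g. J (\<lambda>z. V z * (W z * g z)))"
    using J_repr_comp[of "\<lambda>g. J (\<lambda>z. V z * g z)" "\<lambda>g z. W z * g z"] assms W
    unfolding J_multiplier_def by blast
  moreover have "test_fun (\<lambda>z. V z * (W z * g z))" if "test_fun g" for g
    using assms(1) W[OF that] unfolding J_multiplier_def by blast
  ultimately show ?thesis
    unfolding J_multiplier_def by (simp add: mult.assoc)
qed

lemma J_multiplier_add:
  assumes "J_multiplier V" "J_multiplier W"
  shows "J_multiplier (\<lambda>z. V z + W z)"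
proof -
  have tV: "\<And>g. test_fun g \<Longrightarrow> test_fun (\<lambda>z. V z * g z)" and jV: "J_repr (\<lambda>g. J (\<lambda>z. V z * g z))"
    using assms(1) unfolding J_multiplier_def by auto
  have tW: "\<And>g. test_fun g \<Longrightarrow> test_fun (\<lambda>z. W z * g z)" and jW: "J_repr (\<lambda>g. J (\<lambda>z. W z * g z))"
    using assms(2) unfolding J_multiplier_def by auto
  have "J_repr (\<lambda>g \<tau> x. J (\<lambda>z. V z * g z) \<tau> x + J (\<lambda>z. W z * g z) \<tau> x)"
    by (rule J_repr_add[OF jV jW])
  hence "J_repr (\<lambda>g. J (\<lambda>z. V z * g z + W z * g z))"
    by (rule J_repr_cong) (simp add: J_add tV tW)
  moreover have "(\<lambda>z. (V z + W z) * g z) = (\<lambda>z. V z * g z + W z * g z)" for g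
    by (simp add: distrib_right)
  ultimately show ?thesis
    unfolding J_multiplier_def using tV tW test_fun_add by auto
qed

lemma J_multiplier_const: "J_multiplier (\<lambda>z. c)"
proof -
  have "J_repr (\<lambda>g \<tau> x. c * J g \<tau> x)"
    using J_repr_scale[OF rat_coeff_const J_repr_J] .
  hence "J_repr (\<lambda>g. J (\<lambda>z. c * g z))"
    by (rule J_repr_cong) (simp add: J_cmult)
  thus ?thesis unfolding J_multiplier_def using test_fun_cmult by blast
qed

lemma J_multiplier_cong:
  assumes "J_multiplier V" "\<And>z. Im z > 0 \<Longrightarrow> V z = W z"
  shows "J_multiplier W"
proof -
  have "(\<lambda>z. W z * g z) = (\<lambda>z. V z * g z)" if "test_fun g" for g
  proof
    fix z
    show "W z * g z = V z * g z"
      using assms(2)[of z] test_fun_eq_0_off_Lam[OF that, of z] by (cases "Im z > 0") auto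
  qed
  thus ?thesis
    using assms(1) unfolding J_multiplier_def by (auto intro: J_repr_cong)
qed

lemma J_multiplier_power: "J_multiplier V \<Longrightarrow> J_multiplier (\<lambda>z. V z ^ n)"
  by (induction n) (auto intro: J_multiplier_mult J_multiplier_const)

lemma J_multiplier_sum:
  "finite S \<Longrightarrow> (\<And>i. i \<in> S \<Longrightarrow> J_multiplier (V i)) \<Longrightarrow> J_multiplier (\<lambda>z. \<Sum>i\<in>S. V i z)"
  by (induction S rule: finite_induct) (auto intro: J_multiplier_add J_multiplier_const)

lemma Kern_xderiv_Suc:
  "Kern_xderiv (Suc q) \<sigma> z x = vector_derivative (\<lambda>y. Kern_xderiv q \<sigma> z y) (at x)"
  by (simp add: Kern_xderiv_def xderiv_Suc eta_contract_eq)

lemma Kern_xderiv_0: "Im z > 0 \<Longrightarrow> Kern_xderiv 0 \<sigma> z x = kern \<sigma> z x"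
  by (simp add: Kern_xderiv_def xderiv_def Kern_eq_kern)

lemma Kern_xderiv_1:
  assumes "Im z > 0"
  shows "Kern_xderiv 1 \<sigma> z x = \<sigma> * of_real (2 * (x - Re z) / Im z) * kern (\<sigma> - 1) z x"
proof -
  have "(\<lambda>y. Kern_xderiv 0 \<sigma> z y) = (\<lambda>y. kern \<sigma> z y)"
    using Kern_xderiv_0[OF assms] by auto
  thus ?thesis
    using Kern_xderiv_Suc[of 0 \<sigma> z x] vector_derivative_at[OF kern_has_vector_derivative[OF assms]]
    by simp
qed

lemma Kern_xderiv_2:
  assumes "Im z > 0"
  shows "Kern_xderiv 2 \<sigma> z x =
    \<sigma> * (\<sigma> - 1) * of_real (2 * (x - Re z) / Im z) ^ 2 * kern (\<sigma> - 2) z x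
    + \<sigma> * of_real (2 / Im z) * kern (\<sigma> - 1) z x"
proof -
  define w where "w = (of_real (2 * (x - Re z) / Im z) :: complex)"
  define r where "r = (of_real (2 / Im z) :: complex)"
  have "((\<lambda>y. of_real (2 * (y - Re z) / Im z) :: complex) has_vector_derivative r) (at x)"
    unfolding r_def using assms
    by (intro has_vector_derivative_of_real) (auto intro!: derivative_eq_intros)
  hence "((\<lambda>y. \<sigma> * (of_real (2 * (y - Re z) / Im z) * kern (\<sigma> - 1) z y)) has_vector_derivative
      \<sigma> * (w * ((\<sigma> - 1) * w * kern (\<sigma> - 1 - 1) z x) + r * kern (\<sigma> - 1) z x)) (at x)"
    unfolding w_def
    by (intro has_vector_derivative_mult_right has_vector_derivative_mult kern_has_vector_derivative assms)
  moreover have "(\<lambda>y. Kern_xderiv 1 \<sigma> z y) =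
      (\<lambda>y. \<sigma> * (of_real (2 * (y - Re z) / Im z) * kern (\<sigma> - 1) z y))"
    using Kern_xderiv_1[OF assms] by (auto simp: mult.assoc)
  ultimately have "Kern_xderiv 2 \<sigma> z x = \<sigma> * (w * ((\<sigma> - 1) * w * kern (\<sigma> - 1 - 1) z x) + r * kern (\<sigma> - 1) z x)"
    using Kern_xderiv_Suc[of 1 \<sigma> z x] vector_derivative_at by (metis numeral_2_eq_2 One_nat_def)
  moreover have "\<sigma> - 1 - 1 = \<sigma> - 2" by simp
  ultimately show ?thesis
    unfolding w_def[symmetric] r_def[symmetric] by (simp add: algebra_simps power2_eq_square)
qed

lemma not_half_int_add_1_neq_0: "t \<notin> half_ints \<Longrightarrow> t + 1 \<noteq> 0"
proof
  assume "t \<notin> half_ints" "t + 1 = 0"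
  hence "t = of_int (-2) / 2" "t \<notin> half_ints" by (simp_all add: eq_neg_iff_add_eq_0 add.commute)
  thus False unfolding half_ints_iff by blast
qed

lemma not_half_int_double_add_1_neq_0: "t \<notin> half_ints \<Longrightarrow> 2 * t + 1 \<noteq> 0"
proof
  assume "t \<notin> half_ints" "2 * t + 1 = 0"
  hence "t = of_int (-1) / 2" "t \<notin> half_ints" by (simp_all add: field_simps add_eq_0_iff)
  thus False unfolding half_ints_iff by blast
qed

definition coeff_Kern_xderiv_2 :: "complex \<Rightarrow> complex" where
  "coeff_Kern_xderiv_2 t = 1 / 2 * (1 / (t + 1)) * (1 / (2 * t + 1))"

definition coeff_kern_pred :: "complex \<Rightarrow> complex" where
  "coeff_kern_pred t = 2 * t * (1 / (2 * t + 1))"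

lemma rat_coeff_coeff_Kern_xderiv_2: "rat_coeff coeff_Kern_xderiv_2"
  using rat_coeff_inverse_linear[of 1] rat_coeff_inverse_half_linear[of 1]
  unfolding coeff_Kern_xderiv_2_def[abs_def] by (intro rat_coeff_mult rat_coeff_const) simp_all

lemma rat_coeff_coeff_kern_pred: "rat_coeff coeff_kern_pred"
  using rat_coeff_inverse_half_linear[of 1]
  unfolding coeff_kern_pred_def[abs_def] by (intro rat_coeff_mult rat_coeff_const rat_coeff_id) simp

lemma half_inverse_cancel: "(a::complex) \<noteq> 0 \<Longrightarrow> 1 / 2 * (1 / a) * v * (a * w) = v * w / 2"
  by (simp add: field_simps)

lemma half_inverse_cancel': "(a::complex) \<noteq> 0 \<Longrightarrow> 1 / 2 * (1 / a) * (a * w) = w / 2"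
  by (simp add: field_simps)

lemma kern_div_Im_algebra:
  fixes t K X B u :: complex
  assumes "u \<noteq> 0" "B \<noteq> 0" "u = 2 * t + 1"
  shows "(X\<^sup>2 + B\<^sup>2) / B * K / B =
    1 / u * (t * (2 * X / B)\<^sup>2 * K + 2 / B * ((X\<^sup>2 + B\<^sup>2) / B * K)) / 2 + 2 * t * (1 / u) * K"
    (is "?l = ?r")
proof -
  have "?l * (2 * u * B\<^sup>2) = ?r * (2 * u * B\<^sup>2)"
    using assms(1,2) by (simp add: field_simps power2_eq_square, simp add: assms(3) algebra_simps)
  moreover have "2 * u * B\<^sup>2 \<noteq> 0" using assms(1,2) by simp
  ultimately show ?thesis using mult_right_cancel by blast
qed

text \<open>Division by \<open>Im z\<close> is the one operation that is not already a shift or a multiplication by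
  \<open>x\<close>; it costs a second \<open>x\<close>-derivative and poles at \<open>\<tau> = -1, -1/2\<close>.\<close>
lemma kern_div_Im:
  assumes z: "Im z > 0" and \<tau>: "\<tau> \<notin> half_ints"
  shows "kern \<tau> z x / of_real (Im z) =
    coeff_Kern_xderiv_2 \<tau> * Kern_xderiv 2 (\<tau> + 1) z x + coeff_kern_pred \<tau> * kern (\<tau> - 1) z x"
proof -
  define K where "K = kern (\<tau> - 1) z x"
  define X where "X = (of_real x - of_real (Re z) :: complex)"
  define B where "B = (of_real (Im z) :: complex)"
  define E where "E = \<tau> * (2 * X / B)\<^sup>2 * K + 2 / B * ((X\<^sup>2 + B\<^sup>2) / B * K)"
  have nz: "B \<noteq> 0" "\<tau> + 1 \<noteq> 0" "2 * \<tau> + 1 \<noteq> 0"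
    using z not_half_int_add_1_neq_0[OF \<tau>] not_half_int_double_add_1_neq_0[OF \<tau>]
    by (simp_all add: B_def)
  have k: "kern \<tau> z x = (X\<^sup>2 + B\<^sup>2) / B * K"
    using kern_eq_kern_minus_1[OF z, of \<tau> x] by (simp add: K_def X_def B_def kern_base_def)
  have WX: "(of_real (2 * (x - Re z) / Im z) :: complex) = 2 * X / B"
    and R: "(of_real (2 / Im z) :: complex) = 2 / B"
    and a: "\<tau> + 1 - 1 = \<tau>" "\<tau> + 1 - 2 = \<tau> - 1"
    by (simp_all add: X_def B_def)
  have "Kern_xderiv 2 (\<tau> + 1) z x =
      (\<tau> + 1) * \<tau> * (2 * X / B) ^ 2 * K + (\<tau> + 1) * (2 / B) * ((X\<^sup>2 + B\<^sup>2) / B * K)"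
    using Kern_xderiv_2[OF z, of "\<tau> + 1" x] unfolding WX R a k K_def .
  also have "\<dots> = (\<tau> + 1) * E"
    by (simp add: E_def algebra_simps)
  finally have "Kern_xderiv 2 (\<tau> + 1) z x = (\<tau> + 1) * E" .
  hence d2: "coeff_Kern_xderiv_2 \<tau> * Kern_xderiv 2 (\<tau> + 1) z x = 1 / (2 * \<tau> + 1) * E / 2"
    unfolding coeff_Kern_xderiv_2_def by (simp only: half_inverse_cancel[OF nz(2)])
  have "kern \<tau> z x / of_real (Im z) = (X\<^sup>2 + B\<^sup>2) / B * K / B"
    by (simp add: k B_def)
  also have "\<dots> = 1 / (2 * \<tau> + 1) * E / 2 + 2 * \<tau> * (1 / (2 * \<tau> + 1)) * K"
    unfolding E_def using nz by (intro kern_div_Im_algebra) simp_all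
  finally show ?thesis
    unfolding d2 coeff_kern_pred_def K_def .
qed

lemma Kern_xderiv_1_succ:
  "Im z > 0 \<Longrightarrow>
     Kern_xderiv 1 (\<tau> + 1) z x = (\<tau> + 1) * (2 * (of_real x - of_real (Re z)) / of_real (Im z)) * kern \<tau> z x"
  using Kern_xderiv_1[of z "\<tau> + 1" x] by simp

lemma Re_div_Im_kern:
  assumes z: "Im z > 0" and \<tau>: "\<tau> \<notin> half_ints"
  shows "of_real (Re z) / of_real (Im z) * kern \<tau> z x =
    of_real x * (kern \<tau> z x / of_real (Im z)) - 1 / 2 * (1 / (\<tau> + 1)) * Kern_xderiv 1 (\<tau> + 1) z x"
proof -
  have h: "1 / 2 * (1 / (\<tau> + 1)) * Kern_xderiv 1 (\<tau> + 1) z x =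
      2 * (of_real x - of_real (Re z)) / of_real (Im z) * kern \<tau> z x / 2"
    unfolding Kern_xderiv_1_succ[OF z] mult.assoc[of "\<tau> + 1"]
    by (rule half_inverse_cancel'[OF not_half_int_add_1_neq_0[OF \<tau>]])
  show ?thesis unfolding h using z by (simp add: field_simps)
qed

lemma norm_sq_div_Im_kern:
  assumes z: "Im z > 0" and \<tau>: "\<tau> \<notin> half_ints"
  shows "of_real ((Re z)\<^sup>2 + (Im z)\<^sup>2) / of_real (Im z) * kern \<tau> z x =
    kern (\<tau> + 1) z x + of_real x ^ 2 * (kern \<tau> z x / of_real (Im z))
    - of_real x * (1 / (\<tau> + 1)) * Kern_xderiv 1 (\<tau> + 1) z x"
proof -
  have "of_real x * (1 / (\<tau> + 1)) * Kern_xderiv 1 (\<tau> + 1) z x =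
      of_real x * (2 * (of_real x - of_real (Re z)) / of_real (Im z)) * kern \<tau> z x"
    using not_half_int_add_1_neq_0[OF \<tau>] unfolding Kern_xderiv_1_succ[OF z] by simp
  moreover have "(of_real (Im z) :: complex) \<noteq> 0" using z by simp
  ultimately show ?thesis
    unfolding kern_add_1[OF z] kern_base_def by (simp add: field_simps power2_eq_square)
qed

definition sdop_kernel :: "sdop \<Rightarrow> complex \<Rightarrow> complex \<Rightarrow> real \<Rightarrow> complex" where
  "sdop_kernel L \<tau> z x = (\<Sum>(u, p, q, r)\<leftarrow>L. u \<tau> * of_real x ^ p * Kern_xderiv q (\<tau> + of_int r) z x)"

lemma sdop_kernel_has_integral:
  assumes "test_fun g"
  shows "((\<lambda>z. sdop_kernel L \<tau> z x * mu_weighted g z) has_integral sdop_apply L (J g) \<tau> x) Lam"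
proof (induction L)
  case Nil
  show ?case by (simp add: sdop_kernel_def)
next
  case (Cons e L)
  obtain u p q r where e: "e = (u, p, q, r)" by (cases e)
  have "((\<lambda>z. u \<tau> * of_real x ^ p * (Kern_xderiv q (\<tau> + of_int r) z x * mu_weighted g z))
      has_integral u \<tau> * of_real x ^ p * xderiv q (J g (\<tau> + of_int r)) x) Lam"
    by (intro has_integral_mult_right J_xderiv_has_integral assms)
  from has_integral_add[OF this Cons.IH] show ?case
    by (simp add: e sdop_kernel_def eta_contract_eq algebra_simps)
qed

lemma J_repr_mult_if_kernel_identity:
  assumes "rat_sdop L"
    and "\<And>\<tau> z x. \<tau> \<notin> half_ints \<Longrightarrow> Im z > 0 \<Longrightarrow> Kern \<tau> z x * V z = sdop_kernel L \<tau> z x"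
  shows "J_repr (\<lambda>g. J (\<lambda>z. V z * g z))"
  unfolding J_repr_def
proof (intro exI conjI allI impI)
  fix g \<tau> x assume g: "test_fun g" and \<tau>: "\<tau> \<notin> half_ints"
  have "J (\<lambda>z. V z * g z) \<tau> x = integral Lam (\<lambda>z. sdop_kernel L \<tau> z x * mu_weighted g z)"
    unfolding J_def mu_weighted_def using assms(2)[OF \<tau>]
    by (intro integral_cong) (simp add: mult.assoc)
  also have "\<dots> = sdop_apply L (J g) \<tau> x"
    using sdop_kernel_has_integral[OF g] by (rule integral_unique)
  finally show "J (\<lambda>z. V z * g z) \<tau> x = sdop_apply L (J g) \<tau> x" .
qed (rule assms(1))

definition inv_zdiff :: "complex \<Rightarrow> complex" where
  "inv_zdiff z = 1 / (z - cnj z)"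

lemma inv_zdiff_eq: "Im z > 0 \<Longrightarrow> inv_zdiff z = (-\<i> / 2) / of_real (Im z) ^ 1"
  by (simp add: inv_zdiff_def complex_diff_cnj field_simps)

lemma smooth_on_inv_zdiff: "smooth_on Lam inv_zdiff"
  by (rule smooth_on_cong[OF open_Lam _ smooth_on_divide_Im_power[of "-\<i> / 2" 1]])
     (simp add: inv_zdiff_eq)

lemma Kern_mult_inv_zdiff:
  assumes "\<tau> \<notin> half_ints" "Im z > 0"
  shows "Kern \<tau> z x * inv_zdiff z = sdop_kernel
     [(\<lambda>t. -(\<i>/2) * coeff_Kern_xderiv_2 t, 0, 2, 1), (\<lambda>t. -(\<i>/2) * coeff_kern_pred t, 0, 0, -1)] \<tau> z x"
proof -
  have "Kern \<tau> z x * inv_zdiff z = -(\<i>/2) * (kern \<tau> z x / of_real (Im z))"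
    using assms by (simp add: Kern_eq_kern inv_zdiff_eq)
  also have "\<dots> = -(\<i>/2) * (coeff_Kern_xderiv_2 \<tau> * Kern_xderiv 2 (\<tau> + 1) z x +
      coeff_kern_pred \<tau> * kern (\<tau> - 1) z x)"
    unfolding kern_div_Im[OF assms(2,1)] ..
  finally show ?thesis
    using assms by (simp add: sdop_kernel_def Kern_xderiv_0 algebra_simps)
qed

lemma Kern_mult_z_inv_zdiff:
  assumes "\<tau> \<notin> half_ints" "Im z > 0"
  shows "Kern \<tau> z x * (z * inv_zdiff z) = sdop_kernel
     [(\<lambda>t. -(\<i>/2) * coeff_Kern_xderiv_2 t, 1, 2, 1), (\<lambda>t. -(\<i>/2) * coeff_kern_pred t, 1, 0, -1),
      (\<lambda>t. (\<i>/4) * (1 / (t + 1)), 0, 1, 1), (\<lambda>t. 1/2, 0, 0, 0)] \<tau> z x"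
proof -
  have "Kern \<tau> z x * (z * inv_zdiff z) =
      -(\<i>/2) * (of_real (Re z) / of_real (Im z) * kern \<tau> z x) + 1/2 * kern \<tau> z x"
    using assms unfolding inv_zdiff_def complex_diff_cnj Kern_eq_kern[OF assms(2)]
    by (subst (1 2) complex_eq[of z]) (simp add: field_simps)
  also have "\<dots> = -(\<i>/2) * (of_real x * (coeff_Kern_xderiv_2 \<tau> * Kern_xderiv 2 (\<tau> + 1) z x +
      coeff_kern_pred \<tau> * kern (\<tau> - 1) z x) - 1 / 2 * (1 / (\<tau> + 1)) * Kern_xderiv 1 (\<tau> + 1) z x)
      + 1/2 * kern \<tau> z x"
    unfolding Re_div_Im_kern[OF assms(2,1)] kern_div_Im[OF assms(2,1)] ..
  finally show ?thesis
    using assms by (simp add: sdop_kernel_def Kern_xderiv_0 algebra_simps)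
qed

lemma Kern_mult_cnj_inv_zdiff:
  assumes "\<tau> \<notin> half_ints" "Im z > 0"
  shows "Kern \<tau> z x * (cnj z * inv_zdiff z) = sdop_kernel
     [(\<lambda>t. -(\<i>/2) * coeff_Kern_xderiv_2 t, 1, 2, 1), (\<lambda>t. -(\<i>/2) * coeff_kern_pred t, 1, 0, -1),
      (\<lambda>t. (\<i>/4) * (1 / (t + 1)), 0, 1, 1), (\<lambda>t. -1/2, 0, 0, 0)] \<tau> z x"
proof -
  have "Kern \<tau> z x * (cnj z * inv_zdiff z) =
      -(\<i>/2) * (of_real (Re z) / of_real (Im z) * kern \<tau> z x) - 1/2 * kern \<tau> z x"
    using assms unfolding inv_zdiff_def complex_diff_cnj Kern_eq_kern[OF assms(2)]
    by (subst (1) complex_eq[of z]) (simp add: field_simps complex_cnj_add complex_cnj_mult)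
  also have "\<dots> = -(\<i>/2) * (of_real x * (coeff_Kern_xderiv_2 \<tau> * Kern_xderiv 2 (\<tau> + 1) z x +
      coeff_kern_pred \<tau> * kern (\<tau> - 1) z x) - 1 / 2 * (1 / (\<tau> + 1)) * Kern_xderiv 1 (\<tau> + 1) z x)
      - 1/2 * kern \<tau> z x"
    unfolding Re_div_Im_kern[OF assms(2,1)] kern_div_Im[OF assms(2,1)] ..
  finally show ?thesis
    using assms by (simp add: sdop_kernel_def Kern_xderiv_0 algebra_simps)
qed

lemma Kern_mult_z_cnj_inv_zdiff:
  assumes "\<tau> \<notin> half_ints" "Im z > 0"
  shows "Kern \<tau> z x * (z * cnj z * inv_zdiff z) = sdop_kernel
     [(\<lambda>t. -(\<i>/2), 0, 0, 1), (\<lambda>t. -(\<i>/2) * coeff_Kern_xderiv_2 t, 2, 2, 1),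
      (\<lambda>t. -(\<i>/2) * coeff_kern_pred t, 2, 0, -1), (\<lambda>t. (\<i>/2) * (1 / (t + 1)), 1, 1, 1)] \<tau> z x"
proof -
  have "z * cnj z = of_real ((Re z)\<^sup>2 + (Im z)\<^sup>2)"
    by (simp add: complex_eq_iff power2_eq_square)
  hence "Kern \<tau> z x * (z * cnj z * inv_zdiff z) =
      -(\<i>/2) * (of_real ((Re z)\<^sup>2 + (Im z)\<^sup>2) / of_real (Im z) * kern \<tau> z x)"
    using assms by (simp add: inv_zdiff_eq Kern_eq_kern field_simps)
  also have "\<dots> = -(\<i>/2) * (kern (\<tau> + 1) z x + of_real x ^ 2 * (coeff_Kern_xderiv_2 \<tau> *
      Kern_xderiv 2 (\<tau> + 1) z x + coeff_kern_pred \<tau> * kern (\<tau> - 1) z x)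
      - of_real x * (1 / (\<tau> + 1)) * Kern_xderiv 1 (\<tau> + 1) z x)"
    unfolding norm_sq_div_Im_kern[OF assms(2,1)] kern_div_Im[OF assms(2,1)] ..
  finally show ?thesis
    using assms by (simp add: sdop_kernel_def Kern_xderiv_0 algebra_simps power2_eq_square)
qed

lemma J_multiplier_if_kernel_identity:
  assumes "\<And>\<tau> z x. \<tau> \<notin> half_ints \<Longrightarrow> Im z > 0 \<Longrightarrow> Kern \<tau> z x * V z = sdop_kernel L \<tau> z x"
    and "rat_sdop L" "smooth_on Lam V"
  shows "J_multiplier V"
  using J_multiplierI[OF assms(3) J_repr_mult_if_kernel_identity[OF assms(2,1)]] .

lemma rat_coeff_scaled: "rat_coeff c \<Longrightarrow> rat_coeff (\<lambda>t. a * c t)"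
  by (intro rat_coeff_mult rat_coeff_const)

lemmas J_multiplier_generator_intros =
  rat_coeff_scaled rat_coeff_const rat_coeff_coeff_Kern_xderiv_2 rat_coeff_coeff_kern_pred
  rat_coeff_inverse_linear[of 1, simplified]
  smooth_on_mult[OF open_Lam] smooth_on_id smooth_on_cnj smooth_on_inv_zdiff

lemma J_multiplier_inv_zdiff: "J_multiplier inv_zdiff"
  by (rule J_multiplier_if_kernel_identity[OF Kern_mult_inv_zdiff];
      (assumption | simp only: rat_sdop_Cons rat_sdop_Nil | intro conjI TrueI J_multiplier_generator_intros)+)

lemma J_multiplier_z_inv_zdiff: "J_multiplier (\<lambda>z. z * inv_zdiff z)"
  by (rule J_multiplier_if_kernel_identity[OF Kern_mult_z_inv_zdiff];
      (assumption | simp only: rat_sdop_Cons rat_sdop_Nil | intro conjI TrueI J_multiplier_generator_intros)+)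

lemma J_multiplier_cnj_inv_zdiff: "J_multiplier (\<lambda>z. cnj z * inv_zdiff z)"
  by (rule J_multiplier_if_kernel_identity[OF Kern_mult_cnj_inv_zdiff];
      (assumption | simp only: rat_sdop_Cons rat_sdop_Nil | intro conjI TrueI J_multiplier_generator_intros)+)

lemma J_multiplier_z_cnj_inv_zdiff: "J_multiplier (\<lambda>z. z * cnj z * inv_zdiff z)"
  by (rule J_multiplier_if_kernel_identity[OF Kern_mult_z_cnj_inv_zdiff];
      (assumption | simp only: rat_sdop_Cons rat_sdop_Nil | intro conjI TrueI J_multiplier_generator_intros)+)

lemma J_multiplier_monomial:
  assumes "p \<le> n" "q \<le> n"
  shows "J_multiplier (\<lambda>z. z ^ p * cnj z ^ q / (z - cnj z) ^ n)"
proof -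
  define m a b k where "m = min p q" and "a = p - min p q" and "b = q - min p q"
    and "k = n - max p q"
  have ab: "p = m + a" "q = m + b" and k: "n = m + a + b + k"
    using assms by (auto simp: m_def a_def b_def k_def)
  have "J_multiplier (\<lambda>z. (z * cnj z * inv_zdiff z) ^ m * (z * inv_zdiff z) ^ a *
      (cnj z * inv_zdiff z) ^ b * inv_zdiff z ^ k)"
    by (intro J_multiplier_mult J_multiplier_power J_multiplier_inv_zdiff J_multiplier_z_inv_zdiff
        J_multiplier_cnj_inv_zdiff J_multiplier_z_cnj_inv_zdiff)
  thus ?thesis
  proof (rule J_multiplier_cong)
    fix z :: complex assume "Im z > 0"
    hence "z - cnj z \<noteq> 0" by (simp add: complex_diff_cnj)
    thus "(z * cnj z * inv_zdiff z) ^ m * (z * inv_zdiff z) ^ a * (cnj z * inv_zdiff z) ^ b * inv_zdiff z ^ k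
        = z ^ p * cnj z ^ q / (z - cnj z) ^ n"
      by (simp add: ab k inv_zdiff_def power_add power_mult_distrib power_divide field_simps)
  qed
qed

lemma J_multiplier_A_space:
  assumes "V \<in> A_space"
  shows "J_multiplier V"
proof -
  obtain S c where S: "finite S" "\<forall>(n, p, q) \<in> S. (p, q) \<in> Omega n"
    and V: "V = (\<lambda>z. \<Sum>(n, p, q)\<in>S. c (n, p, q) * z ^ p * cnj z ^ q / (z - cnj z) ^ n)"
    using assms unfolding A_space_def by blast
  have "J_multiplier (\<lambda>z. c (n, p, q) * (z ^ p * cnj z ^ q / (z - cnj z) ^ n))" if "(n, p, q) \<in> S" for n p q
    using S(2) that by (intro J_multiplier_mult J_multiplier_const J_multiplier_monomial) (auto simp: Omega_def)
  thus ?thesis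
    unfolding V by (intro J_multiplier_sum[OF S(1)]) (auto simp: case_prod_beta mult.assoc)
qed

section \<open>Integration by parts on the half plane\<close>

lemma has_integral_cbox_UNIV:
  fixes G :: "complex \<Rightarrow> complex"
  assumes "continuous_on UNIV G" "\<And>z. z \<notin> K \<Longrightarrow> G z = 0" "K \<subseteq> cbox a b"
  shows "(G has_integral integral (cbox a b) G) UNIV"
proof -
  have "G integrable_on cbox a b"
    by (rule integrable_continuous[OF continuous_on_subset[OF assms(1)]]) auto
  hence "(G has_integral integral (cbox a b) G) (cbox a b)" by (simp add: integrable_integral)
  thus ?thesis by (rule has_integral_on_superset) (use assms(2,3) in auto)
qed

lemma has_integral_translate:
  fixes \<Psi> :: "complex \<Rightarrow> complex"
  assumes C: "compact C" and z: "\<And>z. z \<notin> C \<Longrightarrow> \<Psi> z = 0" and c: "continuous_on UNIV \<Psi>"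
  shows "((\<lambda>t. \<Psi> (t + c)) has_integral integral UNIV \<Psi>) UNIV"
proof -
  have "compact (C \<union> (\<lambda>t. t - c) ` C)"
    using C by (intro compact_Un compact_continuous_image continuous_intros) auto
  then obtain a where a: "C \<union> (\<lambda>t. t - c) ` C \<subseteq> cbox (-a) a"
    using bounded_subset_cbox_symmetric[OF compact_imp_bounded] by metis
  have I: "(\<Psi> has_integral integral (cbox (-a) a) \<Psi>) UNIV"
    by (rule has_integral_cbox_UNIV[OF c z]) (use a in auto)
  have Ib: "(\<Psi> has_integral integral (cbox (-a) a) \<Psi>) (cbox (-a) a)"
    using integrable_continuous[OF continuous_on_subset[OF c]] by (simp add: integrable_integral)
  from has_integral_affinity[OF Ib, of 1 c]
  have "((\<lambda>x. \<Psi> (x + c)) has_integral integral (cbox (-a) a) \<Psi>) ((\<lambda>x. x + - c) ` cbox (-a) a)"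
    by simp
  hence "((\<lambda>x. \<Psi> (x + c)) has_integral integral (cbox (-a) a) \<Psi>) UNIV"
  proof (rule has_integral_on_superset)
    fix x assume x: "x \<notin> (\<lambda>x. x + - c) ` cbox (-a) a"
    have "x + c \<notin> C"
    proof
      assume "x + c \<in> C"
      hence "x + c \<in> cbox (-a) a" using a by auto
      hence "x \<in> (\<lambda>x. x + - c) ` cbox (-a) a" by (intro image_eqI[of _ _ "x + c"]) auto
      thus False using x by blast
    qed
    thus "\<Psi> (x + c) = 0" using z by blast
  qed auto
  moreover have "integral UNIV \<Psi> = integral (cbox (-a) a) \<Psi>" using I by (simp add: integral_unique)
  ultimately show ?thesis by simp
qed

lemma has_vector_derivative_integral_translate:
  fixes \<Psi> :: "complex \<Rightarrow> complex"
  assumes D: "\<And>z. (\<Psi> has_derivative \<Psi>' z) (at z)"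
    and cont: "continuous_on UNIV (\<lambda>z. \<Psi>' z v)"
  shows "((\<lambda>h. integral (cbox a b) (\<lambda>t. \<Psi> (t + of_real h * v))) has_vector_derivative
           integral (cbox a b) (\<lambda>t. \<Psi>' t v)) (at 0)"
proof -
  have "((\<lambda>h. integral (cbox a b) (\<lambda>t. \<Psi> (t + of_real h * v))) has_vector_derivative
      integral (cbox a b) (\<lambda>t. \<Psi>' (t + of_real 0 * v) v)) (at 0 within UNIV)"
  proof (rule leibniz_rule_vector_derivative[where fx = "\<lambda>h t. \<Psi>' (t + of_real h * v) v"])
    fix h t
    have "((\<lambda>h. \<Psi> (t + of_real h * v)) has_derivative (\<lambda>k. \<Psi>' (t + of_real h * v) (of_real k * v))) (at h)"
      by (rule has_derivative_compose[OF _ D]) (auto intro!: derivative_eq_intros)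
    moreover have "linear (\<Psi>' (t + of_real h * v))"
      using D has_derivative_linear by blast
    hence "\<Psi>' (t + of_real h * v) (of_real k * v) = k *\<^sub>R \<Psi>' (t + of_real h * v) v" for k
      by (metis linear_scale scaleR_conv_of_real)
    ultimately show "((\<lambda>h. \<Psi> (t + of_real h * v)) has_vector_derivative \<Psi>' (t + of_real h * v) v)
        (at h within UNIV)"
      unfolding has_vector_derivative_def by simp
  next
    have "continuous_on UNIV \<Psi>"
      by (intro continuous_at_imp_continuous_on ballI has_derivative_continuous[OF D])
    hence "continuous_on (cbox a b) (\<lambda>t. \<Psi> (t + of_real h * v))" for h
      by (rule continuous_on_compose2) (auto intro!: continuous_intros)
    thus "(\<lambda>t. \<Psi> (t + of_real h * v)) integrable_on cbox a b" for h
      by (rule integrable_continuous)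
  next
    have "continuous_on (UNIV \<times> cbox a b) (\<lambda>p. (\<lambda>z. \<Psi>' z v) (snd p + of_real (fst p) * v))"
      by (rule continuous_on_compose2[OF cont]) (auto intro!: continuous_intros)
    thus "continuous_on (UNIV \<times> cbox a b) (\<lambda>(h, t). \<Psi>' (t + of_real h * v) v)"
      by (simp add: case_prod_beta)
  qed auto
  thus ?thesis by simp
qed

text \<open>Translating in direction \<open>v\<close> does not change the integral.\<close>
lemma has_integral_directional_derivative_eq_0:
  fixes \<Psi> :: "complex \<Rightarrow> complex" and \<Psi>' :: "complex \<Rightarrow> complex \<Rightarrow> complex"
  assumes C: "compact C" and \<Psi>0: "\<And>z. z \<notin> C \<Longrightarrow> \<Psi> z = 0"
    and D: "\<And>z. (\<Psi> has_derivative \<Psi>' z) (at z)"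
    and cont: "continuous_on UNIV (\<lambda>z. \<Psi>' z v)"
  shows "((\<lambda>z. \<Psi>' z v) has_integral 0) UNIV"
proof -
  have cP: "continuous_on UNIV \<Psi>"
    by (intro continuous_at_imp_continuous_on ballI has_derivative_continuous[OF D])
  have "\<Psi>' z v = 0" if "z \<notin> C" for z
  proof -
    have "open (-C)" using C compact_imp_closed by blast
    hence "(\<Psi> has_derivative (\<lambda>h. 0)) (at z)"
      by (rule has_derivative_transform_within_open[OF has_derivative_const]) (use that \<Psi>0 in auto)
    thus ?thesis using has_derivative_unique[OF D] by metis
  qed
  moreover define C2 where "C2 = (\<lambda>p. fst p - of_real (snd p) * v) ` (C \<times> {-1..1::real})"
  have "compact C2"
    unfolding C2_def using C by (intro compact_continuous_image compact_Times continuous_intros) auto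
  then obtain a where a: "C2 \<subseteq> cbox (-a) a"
    using bounded_subset_cbox_symmetric[OF compact_imp_bounded] by metis
  moreover have "C \<subseteq> C2"
    unfolding C2_def by (force intro: image_eqI[of _ _ "(c, 0)" for c])
  ultimately have I: "((\<lambda>z. \<Psi>' z v) has_integral integral (cbox (-a) a) (\<lambda>t. \<Psi>' t v)) UNIV"
    by (intro has_integral_cbox_UNIV[OF cont, of C]) auto
  have "integral (cbox (-a) a) (\<lambda>t. \<Psi> (t + of_real h * v)) = integral UNIV \<Psi>" if "h \<in> {-1<..<1}" for h
  proof -
    have "\<Psi> (t + of_real h * v) = 0" if "t \<notin> cbox (-a) a" for t
    proof -
      have "t \<notin> C2" using a that by blast
      hence "t + of_real h * v \<notin> C"
        unfolding C2_def using \<open>h \<in> {-1<..<1}\<close>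
        by (auto intro!: image_eqI[of _ _ "(t + of_real h * v, h)"])
      thus ?thesis using \<Psi>0 by blast
    qed
    moreover have "continuous_on UNIV (\<lambda>t. \<Psi> (t + of_real h * v))"
      by (rule continuous_on_compose2[OF cP]) (auto intro!: continuous_intros)
    ultimately have "((\<lambda>t. \<Psi> (t + of_real h * v)) has_integral
        integral (cbox (-a) a) (\<lambda>t. \<Psi> (t + of_real h * v))) UNIV"
      by (intro has_integral_cbox_UNIV[of _ "cbox (-a) a"]) auto
    thus ?thesis using has_integral_translate[OF C \<Psi>0 cP] has_integral_unique by blast
  qed
  hence "((\<lambda>h. integral (cbox (-a) a) (\<lambda>t. \<Psi> (t + of_real h * v))) has_vector_derivative 0) (at 0)"
    by (intro has_vector_derivative_transform_within_open[OF has_vector_derivative_const,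
          of "{-1<..<1}"]) auto
  hence "integral (cbox (-a) a) (\<lambda>t. \<Psi>' t v) = 0"
    using vector_derivative_unique_at has_vector_derivative_integral_translate[OF D cont] by blast
  thus ?thesis using I by simp
qed

lemma continuous_on_pdirs_test_fun: "test_fun g \<Longrightarrow> continuous_on Lam (pdirs [v] g)"
  unfolding test_fun_def smooth_on_def
  by (intro continuous_at_imp_continuous_on ballI differentiable_imp_continuous_within) blast

lemma pdirs_test_fun_eq_0:
  assumes "test_fun g" "compact C" "\<And>z. z \<notin> C \<Longrightarrow> g z = 0" "z \<notin> C"
  shows "pdirs [v] g z = 0"
  using frechet_derivative_zero_outside[OF assms(2,3,4)] by simp

lemma continuous_on_UNIV_restrict_Lam:
  fixes X :: "complex \<Rightarrow> complex"
  assumes "continuous_on Lam X" "compact C" "C \<subseteq> Lam" "\<And>z. z \<in> Lam \<Longrightarrow> z \<notin> C \<Longrightarrow> X z = 0"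
  shows "continuous_on UNIV (\<lambda>z. if z \<in> Lam then X z else 0)"
proof (rule continuous_on_UNIV_vanishing_outside[OF open_Lam assms(2,3)])
  show "continuous_on Lam (\<lambda>z. if z \<in> Lam then X z else 0)"
    by (rule continuous_on_eq[OF assms(1)]) auto
qed (use assms(4) in auto)

lemma has_derivative_extend_by_zero:
  fixes f :: "complex \<Rightarrow> complex"
  assumes S: "open S" and C: "compact C" "C \<subseteq> S"
    and D: "\<And>z. z \<in> S \<Longrightarrow> (f has_derivative f' z) (at z)"
    and f0: "\<And>z. z \<in> S \<Longrightarrow> z \<notin> C \<Longrightarrow> f z = 0"
  shows "((\<lambda>z. if z \<in> S then f z else 0) has_derivative (\<lambda>h. if z \<in> S then f' z h else 0)) (at z)"
proof (cases "z \<in> S")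
  case True
  have "((\<lambda>z. if z \<in> S then f z else 0) has_derivative f' z) (at z)"
    by (rule has_derivative_transform_within_open[OF D[OF True] S True]) simp
  thus ?thesis using True by simp
next
  case False
  hence z: "z \<notin> C" using C(2) by blast
  have "open (-C)" using C(1) compact_imp_closed by blast
  hence "((\<lambda>z. if z \<in> S then f z else 0) has_derivative (\<lambda>h. 0)) (at z)"
    by (rule has_derivative_transform_within_open[OF has_derivative_const]) (use z f0 in auto)
  thus ?thesis using False by simp
qed

lemma has_integral_product_rule_eq_0:
  assumes g: "test_fun g"
    and TD: "\<And>z. z \<in> Lam \<Longrightarrow> (\<Theta> has_derivative \<Theta>' z) (at z)"
    and TC: "\<And>v. continuous_on Lam (\<lambda>z. \<Theta>' z v)"
  shows "((\<lambda>z. if z \<in> Lam then \<Theta> z * pdirs [v] g z + \<Theta>' z v * g z else 0) has_integral 0) UNIV"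
proof -
  obtain C where C: "compact C" "C \<subseteq> Lam" "\<And>z. z \<notin> C \<Longrightarrow> g z = 0"
    using test_funE[OF g] by metis
  have "(g has_derivative frechet_derivative g (at z)) (at z)" if "z \<in> Lam" for z
    using g that unfolding test_fun_def smooth_on_def frechet_derivative_works by (metis pdirs.simps(1))
  hence gd: "(g has_derivative (\<lambda>h. pdirs [h] g z)) (at z)" if "z \<in> Lam" for z
    using that by (simp add: eta_contract_eq)
  have "((\<lambda>z. if z \<in> Lam then \<Theta> z * g z else 0) has_derivative
      (\<lambda>h. if z \<in> Lam then \<Theta> z * pdirs [h] g z + \<Theta>' z h * g z else 0)) (at z)" for z
  proof (rule has_derivative_extend_by_zero[OF open_Lam C(1,2),
        where f' = "\<lambda>z h. \<Theta> z * pdirs [h] g z + \<Theta>' z h * g z"])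
    show "((\<lambda>z. \<Theta> z * g z) has_derivative (\<lambda>h. \<Theta> z * pdirs [h] g z + \<Theta>' z h * g z)) (at z)"
      if "z \<in> Lam" for z
      using has_derivative_mult[OF TD[OF that] gd[OF that]] .
  qed (simp add: C(3))
  moreover have "continuous_on Lam \<Theta>"
    by (intro continuous_at_imp_continuous_on ballI has_derivative_continuous[OF TD])
  hence "continuous_on UNIV (\<lambda>z. if z \<in> Lam then \<Theta> z * pdirs [v] g z + \<Theta>' z v * g z else 0)"
    using pdirs_test_fun_eq_0[OF g C(1) C(3)] C(3)
    by (intro continuous_on_UNIV_restrict_Lam[OF _ C(1,2)] continuous_intros TC
        continuous_on_pdirs_test_fun[OF g] continuous_on_subset[OF continuous_on_test_fun[OF g]]) auto
  ultimately show ?thesis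
    using has_integral_directional_derivative_eq_0[OF C(1),
        where \<Psi> = "\<lambda>z. if z \<in> Lam then \<Theta> z * g z else 0"
        and \<Psi>' = "\<lambda>z h. if z \<in> Lam then \<Theta> z * pdirs [h] g z + \<Theta>' z h * g z else 0"]
    by (simp add: C(3))
qed

lemma integrable_on_Lam_vanishing_outside:
  fixes F :: "complex \<Rightarrow> complex"
  assumes "continuous_on Lam F" "compact C" "C \<subseteq> Lam" "\<And>z. z \<in> Lam \<Longrightarrow> z \<notin> C \<Longrightarrow> F z = 0"
  shows "F integrable_on Lam"
proof -
  obtain a where a: "C \<subseteq> cbox (-a) a"
    using bounded_subset_cbox_symmetric[OF compact_imp_bounded[OF assms(2)]] by blast
  have "((\<lambda>z. if z \<in> Lam then F z else 0) has_integral
      integral (cbox (-a) a) (\<lambda>z. if z \<in> Lam then F z else 0)) Lam"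
    by (rule has_integral_Lam_cbox[OF assms(3) a continuous_on_UNIV_restrict_Lam[OF assms]])
       (use assms(4) in auto)
  hence "(\<lambda>z. if z \<in> Lam then F z else 0) integrable_on Lam" by blast
  thus ?thesis by (rule integrable_eq) simp
qed

lemma integration_by_parts_Lam:
  assumes g: "test_fun g"
    and TD: "\<And>z. z \<in> Lam \<Longrightarrow> (\<Theta> has_derivative \<Theta>' z) (at z)"
    and TC: "\<And>v. continuous_on Lam (\<lambda>z. \<Theta>' z v)"
  shows "((\<lambda>z. \<Theta> z * pdirs [v] g z) has_integral - integral Lam (\<lambda>z. \<Theta>' z v * g z)) Lam"
    and "((\<lambda>z. \<Theta>' z v * g z) has_integral integral Lam (\<lambda>z. \<Theta>' z v * g z)) Lam"
proof -
  obtain C where C: "compact C" "C \<subseteq> Lam" "\<And>z. z \<notin> C \<Longrightarrow> g z = 0"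
    using test_funE[OF g] by metis
  have "continuous_on Lam \<Theta>"
    by (intro continuous_at_imp_continuous_on ballI has_derivative_continuous[OF TD])
  hence A: "(\<lambda>z. \<Theta> z * pdirs [v] g z) integrable_on Lam"
    using pdirs_test_fun_eq_0[OF g C(1,3)]
    by (intro integrable_on_Lam_vanishing_outside[OF _ C(1,2)] continuous_on_mult
        continuous_on_pdirs_test_fun[OF g]) auto
  have B: "(\<lambda>z. \<Theta>' z v * g z) integrable_on Lam"
    by (intro integrable_on_Lam_vanishing_outside[OF _ C(1,2)] continuous_intros TC
        continuous_on_subset[OF continuous_on_test_fun[OF g]]) (auto simp: C(3))
  have "((\<lambda>z. \<Theta> z * pdirs [v] g z + \<Theta>' z v * g z) has_integral 0) Lam"
    using has_integral_product_rule_eq_0[OF g TD TC, of v] has_integral_restrict_UNIV by blast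
  hence "integral Lam (\<lambda>z. \<Theta> z * pdirs [v] g z) + integral Lam (\<lambda>z. \<Theta>' z v * g z) = 0"
    using integral_add[OF A B] by (simp add: integral_unique)
  hence "integral Lam (\<lambda>z. \<Theta> z * pdirs [v] g z) = - integral Lam (\<lambda>z. \<Theta>' z v * g z)"
    by (simp add: eq_neg_iff_add_eq_0)
  thus "((\<lambda>z. \<Theta> z * pdirs [v] g z) has_integral - integral Lam (\<lambda>z. \<Theta>' z v * g z)) Lam"
    using integrable_integral[OF A] by simp
  show "((\<lambda>z. \<Theta>' z v * g z) has_integral integral Lam (\<lambda>z. \<Theta>' z v * g z)) Lam"
    using B by (rule integrable_integral)
qed

lemma integration_by_parts_Lam_pdirs_combination:
  assumes g: "test_fun g"
    and TD: "\<And>z. z \<in> Lam \<Longrightarrow> (\<Theta> has_derivative \<Theta>' z) (at z)"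
    and TC: "\<And>v. continuous_on Lam (\<lambda>z. \<Theta>' z v)"
  shows "integral Lam (\<lambda>z. \<Theta> z * (\<alpha> * pdirs [1] g z + \<beta> * pdirs [\<i>] g z)) =
           integral Lam (\<lambda>z. - (\<alpha> * \<Theta>' z 1 + \<beta> * \<Theta>' z \<i>) * g z)"
proof -
  note A = integration_by_parts_Lam(1)[OF g TD TC] and B = integration_by_parts_Lam(2)[OF g TD TC]
  have "((\<lambda>z. \<alpha> * (\<Theta> z * pdirs [1] g z) + \<beta> * (\<Theta> z * pdirs [\<i>] g z)) has_integral
      \<alpha> * - integral Lam (\<lambda>z. \<Theta>' z 1 * g z) + \<beta> * - integral Lam (\<lambda>z. \<Theta>' z \<i> * g z)) Lam"
    by (intro has_integral_add has_integral_mult_right A)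
  moreover have "((\<lambda>z. - (\<alpha> * (\<Theta>' z 1 * g z) + \<beta> * (\<Theta>' z \<i> * g z))) has_integral
      - (\<alpha> * integral Lam (\<lambda>z. \<Theta>' z 1 * g z) + \<beta> * integral Lam (\<lambda>z. \<Theta>' z \<i> * g z))) Lam"
    by (intro has_integral_neg has_integral_add has_integral_mult_right B)
  ultimately show ?thesis
    by (simp add: integral_unique algebra_simps)
qed

lemma integration_by_parts_Lam_Dz:
  assumes "test_fun g"
    and "\<And>z. z \<in> Lam \<Longrightarrow> (\<Theta> has_derivative \<Theta>' z) (at z)" "\<And>v. continuous_on Lam (\<lambda>z. \<Theta>' z v)"
  shows "integral Lam (\<lambda>z. \<Theta> z * Dz g z) = integral Lam (\<lambda>z. - ((\<Theta>' z 1 - \<i> * \<Theta>' z \<i>) / 2) * g z)"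
  using integration_by_parts_Lam_pdirs_combination[OF assms, of "1/2" "-\<i>/2"]
  by (simp add: Dz_pdirs algebra_simps diff_divide_distrib)

lemma integration_by_parts_Lam_Dzb:
  assumes "test_fun g"
    and "\<And>z. z \<in> Lam \<Longrightarrow> (\<Theta> has_derivative \<Theta>' z) (at z)" "\<And>v. continuous_on Lam (\<lambda>z. \<Theta>' z v)"
  shows "integral Lam (\<lambda>z. \<Theta> z * Dzb g z) = integral Lam (\<lambda>z. - ((\<Theta>' z 1 + \<i> * \<Theta>' z \<i>) / 2) * g z)"
  using integration_by_parts_Lam_pdirs_combination[OF assms, of "1/2" "\<i>/2"]
  by (simp add: Dzb_pdirs algebra_simps add_divide_distrib)

section \<open>First-order operators\<close>

definition kern_base_dz :: "complex \<Rightarrow> real \<Rightarrow> complex \<Rightarrow> real" where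
  "kern_base_dz z x h =
     ((-2 * (x - Re z) * Re h + 2 * Im z * Im h) * Im z - ((x - Re z)\<^sup>2 + (Im z)\<^sup>2) * Im h) / (Im z)\<^sup>2"

lemma kern_base_has_derivative_z:
  assumes "Im z > 0"
  shows "((\<lambda>y. kern_base y x) has_derivative kern_base_dz z x) (at z)"
proof -
  have "((\<lambda>y. ((x - Re y)\<^sup>2 + (Im y)\<^sup>2) / Im y) has_derivative
     (\<lambda>h. ((of_nat 2 * (0 - Re h) * (x - Re z) ^ (2 - 1) + of_nat 2 * Im h * Im z ^ (2 - 1)) * Im z
        - ((x - Re z)\<^sup>2 + (Im z)\<^sup>2) * Im h) / (Im z * Im z))) (at z)"
    using assms
    by (intro has_derivative_divide' has_derivative_add has_derivative_power has_derivative_diff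
        has_derivative_const has_derivative_Re has_derivative_Im has_derivative_ident) auto
  moreover have "(\<lambda>h. ((of_nat 2 * (0 - Re h) * (x - Re z) ^ (2 - 1) + of_nat 2 * Im h * Im z ^ (2 - 1)) * Im z
      - ((x - Re z)\<^sup>2 + (Im z)\<^sup>2) * Im h) / (Im z * Im z)) = kern_base_dz z x"
    by (auto simp: fun_eq_iff kern_base_dz_def power2_eq_square algebra_simps)
  ultimately show ?thesis unfolding kern_base_def by simp
qed

lemma kern_has_derivative_z:
  assumes z: "Im z > 0"
  shows "((\<lambda>y. kern \<sigma> y x) has_derivative (\<lambda>h. \<sigma> * of_real (kern_base_dz z x h) * kern (\<sigma> - 1) z x)) (at z)"
proof -
  have pos: "kern_base z x > 0" using kern_base_pos[OF z] .
  have "((\<lambda>y. \<sigma> * of_real (ln (kern_base y x))) has_derivative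
      (\<lambda>h. \<sigma> * of_real (kern_base_dz z x h * inverse (kern_base z x)))) (at z)"
    by (intro has_derivative_mult_right has_derivative_of_real has_derivative_ln
        kern_base_has_derivative_z z pos)
  from has_derivative_compose[OF this DERIV_exp[unfolded has_field_derivative_def]]
  have "((\<lambda>y. kern \<sigma> y x) has_derivative
      (\<lambda>h. exp (\<sigma> * of_real (ln (kern_base z x))) * (\<sigma> * of_real (kern_base_dz z x h * inverse (kern_base z x)))))
      (at z)"
    unfolding kern_def .
  moreover have "exp (\<sigma> * of_real (ln (kern_base z x))) = of_real (kern_base z x) * kern (\<sigma> - 1) z x"
    using kern_eq_kern_minus_1[OF z, of \<sigma> x] unfolding kern_def .
  ultimately show ?thesis
    using pos by (simp add: field_simps)
qed

definition mu_density :: "complex \<Rightarrow> complex" where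
  "mu_density z = of_real (4 * (Im z)\<^sup>2)"

lemma mu_density_has_derivative:
  "(mu_density has_derivative (\<lambda>h. of_real (8 * Im z * Im h))) (at z)"
  unfolding mu_density_def[abs_def]
  by (auto intro!: derivative_eq_intros simp: power2_eq_square algebra_simps)

text \<open>The factor multiplying \<open>g\<close> in the integrand of \<open>J (\<lambda>z. \<phi> z * Dz g z)\<close>, and its real derivative.\<close>
definition ibp_weight :: "complex \<Rightarrow> real \<Rightarrow> (complex \<Rightarrow> complex) \<Rightarrow> complex \<Rightarrow> complex" where
  "ibp_weight \<tau> x \<phi> z = kern \<tau> z x * (\<phi> z / mu_density z)"

definition ibp_weight_deriv ::
  "complex \<Rightarrow> real \<Rightarrow> (complex \<Rightarrow> complex) \<Rightarrow> (complex \<Rightarrow> complex \<Rightarrow> complex) \<Rightarrow> complex \<Rightarrow> complex \<Rightarrow> complex"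
where
  "ibp_weight_deriv \<tau> x \<phi> \<phi>' z h =
     \<tau> * of_real (kern_base_dz z x h) * kern (\<tau> - 1) z x * (\<phi> z / mu_density z)
     + kern \<tau> z x * ((\<phi>' z h * mu_density z - \<phi> z * of_real (8 * Im z * Im h)) / (mu_density z * mu_density z))"

lemma ibp_weight_has_derivative:
  assumes "Im z > 0" "(\<phi> has_derivative \<phi>' z) (at z)"
  shows "(ibp_weight \<tau> x \<phi> has_derivative ibp_weight_deriv \<tau> x \<phi> \<phi>' z) (at z)"
proof -
  have "mu_density z \<noteq> 0" using assms(1) by (simp add: mu_density_def)
  hence "((\<lambda>y. kern \<tau> y x * (\<phi> y / mu_density y)) has_derivative
      (\<lambda>h. kern \<tau> z x * ((\<phi>' z h * mu_density z - \<phi> z * of_real (8 * Im z * Im h)) /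
        (mu_density z * mu_density z)) + \<tau> * of_real (kern_base_dz z x h) * kern (\<tau> - 1) z x *
        (\<phi> z / mu_density z))) (at z)"
    by (intro has_derivative_mult kern_has_derivative_z has_derivative_divide' mu_density_has_derivative assms)
  thus ?thesis unfolding ibp_weight_def[abs_def] ibp_weight_deriv_def by (simp add: add.commute)
qed

lemma continuous_on_ibp_weight_deriv:
  assumes "continuous_on Lam \<phi>" "continuous_on Lam (\<lambda>z. \<phi>' z h)"
  shows "continuous_on Lam (\<lambda>z. ibp_weight_deriv \<tau> x \<phi> \<phi>' z h)"
proof -
  have "continuous_on Lam (\<lambda>z. (\<lambda>(\<sigma>, z, x). kern (\<sigma> - 0) z x) (s, z, x))" for s
    by (rule continuous_on_compose2[OF continuous_on_kern]) (auto intro!: continuous_intros)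
  hence "continuous_on Lam (\<lambda>z. kern s z x)" for s by simp
  moreover have "continuous_on Lam (\<lambda>z. kern_base_dz z x h)"
    unfolding kern_base_dz_def by (intro continuous_intros) auto
  ultimately show ?thesis
    unfolding ibp_weight_deriv_def mu_density_def by (intro continuous_intros assms) auto
qed

lemma ibp_weight_Dz:
  assumes z: "Im z > 0" and d1: "\<phi>' z 1 = a" and di: "\<phi>' z \<i> = \<i> * a"
  shows "- ((ibp_weight_deriv \<tau> x \<phi> \<phi>' z 1 - \<i> * ibp_weight_deriv \<tau> x \<phi> \<phi>' z \<i>) / 2) * mu_density z =
    kern (\<tau> - 1) z x * (2 * \<i> * \<tau> * \<phi> z * (of_real x - cnj z)\<^sup>2 / (z - cnj z)\<^sup>2
      + 2 * \<i> * (2 * \<phi> z - a * (z - cnj z)) * (of_real x - z) * (of_real x - cnj z) / (z - cnj z)\<^sup>2)"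
proof -
  obtain A B where zAB: "z = Complex A B" by (cases z)
  have "(of_real B :: complex) \<noteq> 0" using z zAB by simp
  moreover have "cnj z = of_real A - \<i> * of_real B" "z = of_real A + \<i> * of_real B"
    using zAB by (simp_all add: Complex_eq)
  ultimately show ?thesis
    unfolding ibp_weight_deriv_def kern_eq_kern_minus_1[OF z, of \<tau> x] d1 di
      mu_density_def kern_base_dz_def kern_base_def
    by (simp add: field_simps power2_eq_square zAB)
qed

lemma ibp_weight_Dzb:
  assumes z: "Im z > 0" and d1: "\<phi>' z 1 = a" and di: "\<phi>' z \<i> = - \<i> * a"
  shows "- ((ibp_weight_deriv \<tau> x \<phi> \<phi>' z 1 + \<i> * ibp_weight_deriv \<tau> x \<phi> \<phi>' z \<i>) / 2) * mu_density z =
    kern (\<tau> - 1) z x * (- 2 * \<i> * \<tau> * \<phi> z * (of_real x - z)\<^sup>2 / (z - cnj z)\<^sup>2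
      - 2 * \<i> * (2 * \<phi> z + a * (z - cnj z)) * (of_real x - z) * (of_real x - cnj z) / (z - cnj z)\<^sup>2)"
proof -
  obtain A B where zAB: "z = Complex A B" by (cases z)
  have "(of_real B :: complex) \<noteq> 0" using z zAB by simp
  moreover have "cnj z = of_real A - \<i> * of_real B" "z = of_real A + \<i> * of_real B"
    using zAB by (simp_all add: Complex_eq)
  ultimately show ?thesis
    unfolding ibp_weight_deriv_def kern_eq_kern_minus_1[OF z, of \<tau> x] d1 di
      mu_density_def kern_base_dz_def kern_base_def
    by (simp add: field_simps power2_eq_square zAB)
qed

definition J_compatible :: "((complex \<Rightarrow> complex) \<Rightarrow> (complex \<Rightarrow> complex)) \<Rightarrow> bool" where
  "J_compatible T \<longleftrightarrow> (\<forall>g. test_fun g \<longrightarrow> test_fun (T g)) \<and> J_repr (\<lambda>g. J (T g))"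

lemma test_fun_mult_xquadratic:
  assumes "J_multiplier A" "J_multiplier B" "J_multiplier C" "test_fun g"
  shows "test_fun (\<lambda>z. (A z * y\<^sup>2 + B z * y + C z) * g z)"
proof -
  have "test_fun (\<lambda>z. y\<^sup>2 * (A z * g z) + (y * (B z * g z) + C z * g z))"
    using assms by (intro test_fun_add test_fun_cmult) (auto simp: J_multiplier_def)
  thus ?thesis by (simp add: algebra_simps)
qed

lemma J_mult_xquadratic:
  assumes "J_multiplier A" "J_multiplier B" "J_multiplier C" "test_fun g"
  shows "J (\<lambda>z. (A z * y\<^sup>2 + B z * y + C z) * g z) \<tau> x =
    y\<^sup>2 * J (\<lambda>z. A z * g z) \<tau> x + y * J (\<lambda>z. B z * g z) \<tau> x + J (\<lambda>z. C z * g z) \<tau> x"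
proof -
  have t: "test_fun (\<lambda>z. A z * g z)" "test_fun (\<lambda>z. B z * g z)" "test_fun (\<lambda>z. C z * g z)"
    using assms unfolding J_multiplier_def by blast+
  have "(\<lambda>z. (A z * y\<^sup>2 + B z * y + C z) * g z) =
      (\<lambda>z. y\<^sup>2 * (A z * g z) + (y * (B z * g z) + C z * g z))"
    by (simp add: algebra_simps)
  thus ?thesis
    using t by (simp add: J_add J_cmult test_fun_add test_fun_cmult add.assoc)
qed

lemma J_repr_mult_xquadratic:
  assumes "J_multiplier A" "J_multiplier B" "J_multiplier C"
  shows "J_repr (\<lambda>g \<tau> x. J (\<lambda>z. (A z * (of_real x)\<^sup>2 + B z * of_real x + C z) * g z) \<tau> x)"
proof -
  have "J_repr (\<lambda>g \<tau> x. of_real x ^ 2 * J (\<lambda>z. A z * g z) \<tau> x +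
      of_real x ^ 1 * J (\<lambda>z. B z * g z) \<tau> x + J (\<lambda>z. C z * g z) \<tau> x)"
    using assms unfolding J_multiplier_def by (intro J_repr_add J_repr_xpow) auto
  thus ?thesis
    by (rule J_repr_cong) (simp add: J_mult_xquadratic assms)
qed

lemma J_compatible_if_ibp_identity:
  assumes T: "\<And>g. test_fun g \<Longrightarrow> test_fun (T g)"
    and eq: "\<And>g \<tau> x. test_fun g \<Longrightarrow>
      J (T g) \<tau> x = \<tau> * J (\<lambda>z. (A1 z * (of_real x)\<^sup>2 + B1 z * of_real x + C1 z) * g z) (\<tau> - 1) x
                    + J (\<lambda>z. (A2 z * (of_real x)\<^sup>2 + B2 z * of_real x + C2 z) * g z) (\<tau> - 1) x"
    and M: "J_multiplier A1" "J_multiplier B1" "J_multiplier C1"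
      "J_multiplier A2" "J_multiplier B2" "J_multiplier C2"
  shows "J_compatible T"
proof -
  have "J_repr (\<lambda>g \<tau> x.
      \<tau> * J (\<lambda>z. (A1 z * (of_real x)\<^sup>2 + B1 z * of_real x + C1 z) * g z) (\<tau> + of_int (-1)) x
      + J (\<lambda>z. (A2 z * (of_real x)\<^sup>2 + B2 z * of_real x + C2 z) * g z) (\<tau> + of_int (-1)) x)"
    by (intro J_repr_add J_repr_scale[OF rat_coeff_id] J_repr_shift J_repr_mult_xquadratic M)
  hence "J_repr (\<lambda>g. J (T g))"
    by (rule J_repr_cong) (simp add: eq)
  thus ?thesis using T by (simp add: J_compatible_def)
qed

lemma integral_split_at_pred:
  assumes W: "\<And>z. Im z > 0 \<Longrightarrow> - W z * mu_density z = kern (\<tau> - 1) z x * (\<tau> * Q1 z + Q2 z)"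
    and tQ: "test_fun (\<lambda>z. Q1 z * g z)" "test_fun (\<lambda>z. Q2 z * g z)"
  shows "integral Lam (\<lambda>z. - W z * g z) =
    \<tau> * J (\<lambda>z. Q1 z * g z) (\<tau> - 1) x + J (\<lambda>z. Q2 z * g z) (\<tau> - 1) x"
proof -
  have "- W z * g z = \<tau> * (Kern (\<tau> - 1) z x * (Q1 z * g z) / of_real (4 * (Im z)\<^sup>2))
      + Kern (\<tau> - 1) z x * (Q2 z * g z) / of_real (4 * (Im z)\<^sup>2)" if "z \<in> Lam" for z
  proof -
    from that have z: "Im z > 0" and "mu_density z \<noteq> 0" by (simp_all add: mu_density_def)
    hence "- W z = kern (\<tau> - 1) z x * (\<tau> * Q1 z + Q2 z) / mu_density z"
      using W by (simp add: eq_divide_eq)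
    thus ?thesis
      unfolding mu_density_def[symmetric] Kern_eq_kern[OF z] by (simp add: algebra_simps add_divide_distrib)
  qed
  hence "integral Lam (\<lambda>z. - W z * g z) = integral Lam (\<lambda>z.
      \<tau> * (Kern (\<tau> - 1) z x * (Q1 z * g z) / of_real (4 * (Im z)\<^sup>2))
      + Kern (\<tau> - 1) z x * (Q2 z * g z) / of_real (4 * (Im z)\<^sup>2))"
    by (intro integral_cong)
  also have "\<dots> = \<tau> * J (\<lambda>z. Q1 z * g z) (\<tau> - 1) x + J (\<lambda>z. Q2 z * g z) (\<tau> - 1) x"
    by (intro integral_unique has_integral_add has_integral_mult_right J_has_integral tQ)
  finally show ?thesis .
qed

lemma J_mult_Dz_eq:
  assumes \<phi>: "\<And>z. Im z > 0 \<Longrightarrow> (\<phi> has_derivative d\<phi> z) (at z)" "\<And>h. continuous_on Lam (\<lambda>z. d\<phi> z h)"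
    and CR: "\<And>z. Im z > 0 \<Longrightarrow> d\<phi> z 1 = \<phi>' z" "\<And>z. Im z > 0 \<Longrightarrow> d\<phi> z \<i> = \<i> * \<phi>' z"
    and g: "test_fun g"
    and Q: "\<And>z. Im z > 0 \<Longrightarrow> Q1 z = 2 * \<i> * \<phi> z * (of_real x - cnj z)\<^sup>2 / (z - cnj z)\<^sup>2"
      "\<And>z. Im z > 0 \<Longrightarrow> Q2 z =
         2 * \<i> * (2 * \<phi> z - \<phi>' z * (z - cnj z)) * (of_real x - z) * (of_real x - cnj z) / (z - cnj z)\<^sup>2"
    and tQ: "test_fun (\<lambda>z. Q1 z * g z)" "test_fun (\<lambda>z. Q2 z * g z)"
  shows "J (\<lambda>z. \<phi> z * Dz g z) \<tau> x = \<tau> * J (\<lambda>z. Q1 z * g z) (\<tau> - 1) x + J (\<lambda>z. Q2 z * g z) (\<tau> - 1) x"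
proof -
  have D: "\<And>z. z \<in> Lam \<Longrightarrow> (ibp_weight \<tau> x \<phi> has_derivative ibp_weight_deriv \<tau> x \<phi> d\<phi> z) (at z)"
    using \<phi>(1) by (simp add: ibp_weight_has_derivative)
  have "continuous_on Lam \<phi>"
    using \<phi>(1) by (intro continuous_at_imp_continuous_on ballI has_derivative_continuous) auto
  hence C: "\<And>v. continuous_on Lam (\<lambda>z. ibp_weight_deriv \<tau> x \<phi> d\<phi> z v)"
    by (intro continuous_on_ibp_weight_deriv \<phi>(2))
  have "J (\<lambda>z. \<phi> z * Dz g z) \<tau> x = integral Lam (\<lambda>z. ibp_weight \<tau> x \<phi> z * Dz g z)"
    unfolding J_def by (intro integral_cong) (simp add: Kern_eq_kern ibp_weight_def mu_density_def)
  also have "\<dots> = integral Lam (\<lambda>z.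
      - ((ibp_weight_deriv \<tau> x \<phi> d\<phi> z 1 - \<i> * ibp_weight_deriv \<tau> x \<phi> d\<phi> z \<i>) / 2) * g z)"
    by (rule integration_by_parts_Lam_Dz[OF g D C])
  also have "\<dots> = \<tau> * J (\<lambda>z. Q1 z * g z) (\<tau> - 1) x + J (\<lambda>z. Q2 z * g z) (\<tau> - 1) x"
  proof (rule integral_split_at_pred[OF _ tQ])
    fix z :: complex assume z: "Im z > 0"
    have "\<tau> * Q1 z + Q2 z = 2 * \<i> * \<tau> * \<phi> z * (of_real x - cnj z)\<^sup>2 / (z - cnj z)\<^sup>2
        + 2 * \<i> * (2 * \<phi> z - \<phi>' z * (z - cnj z)) * (of_real x - z) * (of_real x - cnj z) / (z - cnj z)\<^sup>2"
      by (simp add: Q[OF z] divide_inverse algebra_simps)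
    thus "- ((ibp_weight_deriv \<tau> x \<phi> d\<phi> z 1 - \<i> * ibp_weight_deriv \<tau> x \<phi> d\<phi> z \<i>) / 2) * mu_density z =
        kern (\<tau> - 1) z x * (\<tau> * Q1 z + Q2 z)"
      using ibp_weight_Dz[of z d\<phi> "\<phi>' z" \<tau> x \<phi>, OF z CR[OF z]] by simp
  qed
  finally show ?thesis .
qed

lemma J_mult_Dzb_eq:
  assumes \<phi>: "\<And>z. Im z > 0 \<Longrightarrow> (\<phi> has_derivative d\<phi> z) (at z)" "\<And>h. continuous_on Lam (\<lambda>z. d\<phi> z h)"
    and CR: "\<And>z. Im z > 0 \<Longrightarrow> d\<phi> z 1 = \<phi>' z" "\<And>z. Im z > 0 \<Longrightarrow> d\<phi> z \<i> = - \<i> * \<phi>' z"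
    and g: "test_fun g"
    and Q: "\<And>z. Im z > 0 \<Longrightarrow> Q1 z = - 2 * \<i> * \<phi> z * (of_real x - z)\<^sup>2 / (z - cnj z)\<^sup>2"
      "\<And>z. Im z > 0 \<Longrightarrow> Q2 z =
         - 2 * \<i> * (2 * \<phi> z + \<phi>' z * (z - cnj z)) * (of_real x - z) * (of_real x - cnj z) / (z - cnj z)\<^sup>2"
    and tQ: "test_fun (\<lambda>z. Q1 z * g z)" "test_fun (\<lambda>z. Q2 z * g z)"
  shows "J (\<lambda>z. \<phi> z * Dzb g z) \<tau> x = \<tau> * J (\<lambda>z. Q1 z * g z) (\<tau> - 1) x + J (\<lambda>z. Q2 z * g z) (\<tau> - 1) x"
proof -
  have D: "\<And>z. z \<in> Lam \<Longrightarrow> (ibp_weight \<tau> x \<phi> has_derivative ibp_weight_deriv \<tau> x \<phi> d\<phi> z) (at z)"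
    using \<phi>(1) by (simp add: ibp_weight_has_derivative)
  have "continuous_on Lam \<phi>"
    using \<phi>(1) by (intro continuous_at_imp_continuous_on ballI has_derivative_continuous) auto
  hence C: "\<And>v. continuous_on Lam (\<lambda>z. ibp_weight_deriv \<tau> x \<phi> d\<phi> z v)"
    by (intro continuous_on_ibp_weight_deriv \<phi>(2))
  have "J (\<lambda>z. \<phi> z * Dzb g z) \<tau> x = integral Lam (\<lambda>z. ibp_weight \<tau> x \<phi> z * Dzb g z)"
    unfolding J_def by (intro integral_cong) (simp add: Kern_eq_kern ibp_weight_def mu_density_def)
  also have "\<dots> = integral Lam (\<lambda>z.
      - ((ibp_weight_deriv \<tau> x \<phi> d\<phi> z 1 + \<i> * ibp_weight_deriv \<tau> x \<phi> d\<phi> z \<i>) / 2) * g z)"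
    by (rule integration_by_parts_Lam_Dzb[OF g D C])
  also have "\<dots> = \<tau> * J (\<lambda>z. Q1 z * g z) (\<tau> - 1) x + J (\<lambda>z. Q2 z * g z) (\<tau> - 1) x"
  proof (rule integral_split_at_pred[OF _ tQ])
    fix z :: complex assume z: "Im z > 0"
    have "\<tau> * Q1 z + Q2 z = - 2 * \<i> * \<tau> * \<phi> z * (of_real x - z)\<^sup>2 / (z - cnj z)\<^sup>2
        - 2 * \<i> * (2 * \<phi> z + \<phi>' z * (z - cnj z)) * (of_real x - z) * (of_real x - cnj z) / (z - cnj z)\<^sup>2"
      by (simp add: Q[OF z] divide_inverse algebra_simps)
    thus "- ((ibp_weight_deriv \<tau> x \<phi> d\<phi> z 1 + \<i> * ibp_weight_deriv \<tau> x \<phi> d\<phi> z \<i>) / 2) * mu_density z =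
        kern (\<tau> - 1) z x * (\<tau> * Q1 z + Q2 z)"
      using ibp_weight_Dzb[of z d\<phi> "\<phi>' z" \<tau> x \<phi>, OF z CR[OF z]] by simp
  qed
  finally show ?thesis .
qed

lemma J_multiplier_Re_inv_zdiff: "J_multiplier (\<lambda>z. (z + cnj z) * inv_zdiff z)"
  using J_multiplier_add[OF J_multiplier_z_inv_zdiff J_multiplier_cnj_inv_zdiff]
  by (simp add: distrib_right)

lemma J_compatible_mult_Dz:
  assumes \<phi>: "\<And>z. Im z > 0 \<Longrightarrow> (\<phi> has_derivative d\<phi> z) (at z)" "\<And>h. continuous_on Lam (\<lambda>z. d\<phi> z h)"
      "smooth_on Lam \<phi>"
    and CR: "\<And>z. Im z > 0 \<Longrightarrow> d\<phi> z 1 = \<phi>' z" "\<And>z. Im z > 0 \<Longrightarrow> d\<phi> z \<i> = \<i> * \<phi>' z"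
    and M1: "\<And>j. j \<le> 2 \<Longrightarrow> J_multiplier (\<lambda>z. \<phi> z * cnj z ^ j / (z - cnj z)\<^sup>2)"
    and M2: "J_multiplier (\<lambda>z. (2 * \<phi> z - \<phi>' z * (z - cnj z)) * inv_zdiff z)"
  shows "J_compatible (\<lambda>g z. \<phi> z * Dz g z)"
proof -
  define \<psi> where "\<psi> z = (2 * \<phi> z - \<phi>' z * (z - cnj z)) * inv_zdiff z" for z
  define A1 B1 C1 where "A1 z = 2 * \<i> * (\<phi> z * cnj z ^ 0 / (z - cnj z)\<^sup>2)"
    and "B1 z = - 4 * \<i> * (\<phi> z * cnj z ^ 1 / (z - cnj z)\<^sup>2)"
    and "C1 z = 2 * \<i> * (\<phi> z * cnj z ^ 2 / (z - cnj z)\<^sup>2)" for z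
  define A2 B2 C2 where "A2 z = 2 * \<i> * (\<psi> z * inv_zdiff z)"
    and "B2 z = - 2 * \<i> * (\<psi> z * ((z + cnj z) * inv_zdiff z))"
    and "C2 z = 2 * \<i> * (\<psi> z * (z * cnj z * inv_zdiff z))" for z
  have M: "J_multiplier A1" "J_multiplier B1" "J_multiplier C1"
    "J_multiplier A2" "J_multiplier B2" "J_multiplier C2"
    unfolding A1_def[abs_def] B1_def[abs_def] C1_def[abs_def]
      A2_def[abs_def] B2_def[abs_def] C2_def[abs_def]
    using M2 unfolding \<psi>_def[symmetric]
    by (intro J_multiplier_mult J_multiplier_const M1 J_multiplier_inv_zdiff J_multiplier_Re_inv_zdiff
        J_multiplier_z_cnj_inv_zdiff; simp)+
  show ?thesis
  proof (rule J_compatible_if_ibp_identity[OF _ _ M])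
    fix g assume "test_fun g"
    thus "test_fun (\<lambda>z. \<phi> z * Dz g z)" by (rule test_fun_mult[OF \<phi>(3) test_fun_Dz])
  next
    fix g \<tau> x assume g: "test_fun g"
    show "J (\<lambda>z. \<phi> z * Dz g z) \<tau> x =
      \<tau> * J (\<lambda>z. (A1 z * (of_real x)\<^sup>2 + B1 z * of_real x + C1 z) * g z) (\<tau> - 1) x
      + J (\<lambda>z. (A2 z * (of_real x)\<^sup>2 + B2 z * of_real x + C2 z) * g z) (\<tau> - 1) x"
    proof (rule J_mult_Dz_eq[OF \<phi>(1,2) CR g])
      fix z :: complex assume "Im z > 0"
      define d where "d = z - cnj z"
      have "d \<noteq> 0" using \<open>Im z > 0\<close> by (simp add: d_def complex_diff_cnj)
      thus "A1 z * (of_real x)\<^sup>2 + B1 z * of_real x + C1 z =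
          2 * \<i> * \<phi> z * (of_real x - cnj z)\<^sup>2 / (z - cnj z)\<^sup>2"
        "A2 z * (of_real x)\<^sup>2 + B2 z * of_real x + C2 z =
          2 * \<i> * (2 * \<phi> z - \<phi>' z * (z - cnj z)) * (of_real x - z) * (of_real x - cnj z) / (z - cnj z)\<^sup>2"
        unfolding A1_def B1_def C1_def A2_def B2_def C2_def \<psi>_def inv_zdiff_def d_def[symmetric]
        by (simp_all add: field_simps power2_eq_square)
    qed (assumption | intro test_fun_mult_xquadratic M g)+
  qed
qed

lemma J_compatible_mult_Dzb:
  assumes \<phi>: "\<And>z. Im z > 0 \<Longrightarrow> (\<phi> has_derivative d\<phi> z) (at z)" "\<And>h. continuous_on Lam (\<lambda>z. d\<phi> z h)"
      "smooth_on Lam \<phi>"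
    and CR: "\<And>z. Im z > 0 \<Longrightarrow> d\<phi> z 1 = \<phi>' z" "\<And>z. Im z > 0 \<Longrightarrow> d\<phi> z \<i> = - \<i> * \<phi>' z"
    and M1: "\<And>j. j \<le> 2 \<Longrightarrow> J_multiplier (\<lambda>z. \<phi> z * z ^ j / (z - cnj z)\<^sup>2)"
    and M2: "J_multiplier (\<lambda>z. (2 * \<phi> z + \<phi>' z * (z - cnj z)) * inv_zdiff z)"
  shows "J_compatible (\<lambda>g z. \<phi> z * Dzb g z)"
proof -
  define \<psi> where "\<psi> z = (2 * \<phi> z + \<phi>' z * (z - cnj z)) * inv_zdiff z" for z
  define A1 B1 C1 where "A1 z = - 2 * \<i> * (\<phi> z * z ^ 0 / (z - cnj z)\<^sup>2)"
    and "B1 z = 4 * \<i> * (\<phi> z * z ^ 1 / (z - cnj z)\<^sup>2)"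
    and "C1 z = - 2 * \<i> * (\<phi> z * z ^ 2 / (z - cnj z)\<^sup>2)" for z
  define A2 B2 C2 where "A2 z = - 2 * \<i> * (\<psi> z * inv_zdiff z)"
    and "B2 z = 2 * \<i> * (\<psi> z * ((z + cnj z) * inv_zdiff z))"
    and "C2 z = - 2 * \<i> * (\<psi> z * (z * cnj z * inv_zdiff z))" for z
  have M: "J_multiplier A1" "J_multiplier B1" "J_multiplier C1"
    "J_multiplier A2" "J_multiplier B2" "J_multiplier C2"
    unfolding A1_def[abs_def] B1_def[abs_def] C1_def[abs_def]
      A2_def[abs_def] B2_def[abs_def] C2_def[abs_def]
    using M2 unfolding \<psi>_def[symmetric]
    by (intro J_multiplier_mult J_multiplier_const M1 J_multiplier_inv_zdiff J_multiplier_Re_inv_zdiff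
        J_multiplier_z_cnj_inv_zdiff; simp)+
  show ?thesis
  proof (rule J_compatible_if_ibp_identity[OF _ _ M])
    fix g assume "test_fun g"
    thus "test_fun (\<lambda>z. \<phi> z * Dzb g z)" by (rule test_fun_mult[OF \<phi>(3) test_fun_Dzb])
  next
    fix g \<tau> x assume g: "test_fun g"
    show "J (\<lambda>z. \<phi> z * Dzb g z) \<tau> x =
      \<tau> * J (\<lambda>z. (A1 z * (of_real x)\<^sup>2 + B1 z * of_real x + C1 z) * g z) (\<tau> - 1) x
      + J (\<lambda>z. (A2 z * (of_real x)\<^sup>2 + B2 z * of_real x + C2 z) * g z) (\<tau> - 1) x"
    proof (rule J_mult_Dzb_eq[OF \<phi>(1,2) CR g])
      fix z :: complex assume "Im z > 0"
      define d where "d = z - cnj z"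
      have "d \<noteq> 0" using \<open>Im z > 0\<close> by (simp add: d_def complex_diff_cnj)
      thus "A1 z * (of_real x)\<^sup>2 + B1 z * of_real x + C1 z =
          - 2 * \<i> * \<phi> z * (of_real x - z)\<^sup>2 / (z - cnj z)\<^sup>2"
        "A2 z * (of_real x)\<^sup>2 + B2 z * of_real x + C2 z =
          - 2 * \<i> * (2 * \<phi> z + \<phi>' z * (z - cnj z)) * (of_real x - z) * (of_real x - cnj z) / (z - cnj z)\<^sup>2"
        unfolding A1_def B1_def C1_def A2_def B2_def C2_def \<psi>_def inv_zdiff_def d_def[symmetric]
        by (simp_all add: field_simps power2_eq_square)
    qed (assumption | intro test_fun_mult_xquadratic M g)+
  qed
qed

lemma J_multiplier_first_order_factor:
  assumes "k \<le> (2::nat)" "\<And>z. \<psi> z = (if k = 0 then 2 else if k = 1 then z + cnj z else 2 * (z * cnj z))"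
  shows "J_multiplier (\<lambda>z. \<psi> z * inv_zdiff z)"
proof -
  consider "k = 0" | "k = 1" | "k = 2" using assms(1) by linarith
  thus ?thesis
  proof cases
    case 1
    thus ?thesis
      using J_multiplier_mult[OF J_multiplier_const J_multiplier_inv_zdiff, of 2] by (simp add: assms(2))
  next
    case 2
    thus ?thesis using J_multiplier_Re_inv_zdiff by (simp add: assms(2))
  next
    case 3
    thus ?thesis
      using J_multiplier_mult[OF J_multiplier_const J_multiplier_z_cnj_inv_zdiff, of 2]
      by (simp add: assms(2) mult.assoc)
  qed
qed

lemma first_order_factor_eq:
  assumes "k \<le> (2::nat)"
  shows "2 * z ^ k - of_nat k * z ^ (k - 1) * (z - cnj z) =
           (if k = 0 then 2 else if k = 1 then z + cnj z else 2 * (z * cnj z))"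
    and "2 * cnj z ^ k + of_nat k * cnj z ^ (k - 1) * (z - cnj z) =
           (if k = 0 then 2 else if k = 1 then z + cnj z else 2 * (z * cnj z))"
proof -
  consider "k = 0" | "k = 1" | "k = 2" using assms by linarith
  thus "2 * z ^ k - of_nat k * z ^ (k - 1) * (z - cnj z) =
           (if k = 0 then 2 else if k = 1 then z + cnj z else 2 * (z * cnj z))"
    "2 * cnj z ^ k + of_nat k * cnj z ^ (k - 1) * (z - cnj z) =
           (if k = 0 then 2 else if k = 1 then z + cnj z else 2 * (z * cnj z))"
    by (cases; simp add: algebra_simps power2_eq_square)+
qed

lemma J_compatible_power_Dz:
  assumes "k \<le> 2"
  shows "J_compatible (\<lambda>g z. z ^ k * Dz g z)"
proof (rule J_compatible_mult_Dz[where d\<phi> = "\<lambda>z h. of_nat k * h * z ^ (k - 1)"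
      and \<phi>' = "\<lambda>z. of_nat k * z ^ (k - 1)"])
  show "((\<lambda>z. z ^ k) has_derivative (\<lambda>h. of_nat k * h * z ^ (k - 1))) (at z)" for z :: complex
    by (intro has_derivative_power has_derivative_ident)
  show "continuous_on Lam (\<lambda>z. of_nat k * h * z ^ (k - 1))" for h :: complex
    by (intro continuous_intros)
  show "smooth_on Lam (\<lambda>z. z ^ k)" by (rule smooth_on_power)
  show "J_multiplier (\<lambda>z. z ^ k * cnj z ^ j / (z - cnj z)\<^sup>2)" if "j \<le> 2" for j
    using assms that by (rule J_multiplier_monomial)
  show "J_multiplier (\<lambda>z. (2 * z ^ k - of_nat k * z ^ (k - 1) * (z - cnj z)) * inv_zdiff z)"
    using assms by (rule J_multiplier_first_order_factor[OF _ first_order_factor_eq(1)[OF assms]])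
qed simp_all

lemma J_compatible_cnj_power_Dzb:
  assumes "k \<le> 2"
  shows "J_compatible (\<lambda>g z. cnj z ^ k * Dzb g z)"
proof (rule J_compatible_mult_Dzb[where d\<phi> = "\<lambda>z h. of_nat k * cnj h * cnj z ^ (k - 1)"
      and \<phi>' = "\<lambda>z. of_nat k * cnj z ^ (k - 1)"])
  show "((\<lambda>z. cnj z ^ k) has_derivative (\<lambda>h. of_nat k * cnj h * cnj z ^ (k - 1))) (at z)" for z :: complex
    by (intro has_derivative_power has_derivative_cnj has_derivative_ident)
  show "continuous_on Lam (\<lambda>z. of_nat k * cnj h * cnj z ^ (k - 1))" for h :: complex
    by (intro continuous_intros)
  show "smooth_on Lam (\<lambda>z. cnj z ^ k)" by (rule smooth_on_cnj_power)
  show "J_multiplier (\<lambda>z. cnj z ^ k * z ^ j / (z - cnj z)\<^sup>2)" if "j \<le> 2" for j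
    using J_multiplier_monomial[OF that assms] by (simp add: mult.commute)
  show "J_multiplier (\<lambda>z. (2 * cnj z ^ k + of_nat k * cnj z ^ (k - 1) * (z - cnj z)) * inv_zdiff z)"
    using assms by (rule J_multiplier_first_order_factor[OF _ first_order_factor_eq(2)[OF assms]])
qed simp_all

lemma J_compatible_id: "J_compatible (\<lambda>g. g)"
  unfolding J_compatible_def using J_repr_J by (simp add: eta_contract_eq)

lemma J_compatible_comp: "J_compatible T1 \<Longrightarrow> J_compatible T2 \<Longrightarrow> J_compatible (T1 \<circ> T2)"
  unfolding J_compatible_def using J_repr_comp[of "\<lambda>g. J (T1 g)" T2] by auto

lemma J_compatible_funpow: "J_compatible T \<Longrightarrow> J_compatible (T ^^ n)"
  by (induction n) (auto simp: id_def J_compatible_id funpow_Suc_right intro: J_compatible_comp)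

lemma J_compatible_basic_ops:
  "J_compatible opZ0" "J_compatible opZ1" "J_compatible opZ2"
  "J_compatible opB0" "J_compatible opB1" "J_compatible opB2"
  using J_compatible_power_Dz[of 0] J_compatible_power_Dz[of 1] J_compatible_power_Dz[of 2]
    J_compatible_cnj_power_Dzb[of 0] J_compatible_cnj_power_Dzb[of 1] J_compatible_cnj_power_Dzb[of 2]
  unfolding opZ0_def[abs_def] opZ1_def[abs_def] opZ2_def[abs_def]
    opB0_def[abs_def] opB1_def[abs_def] opB2_def[abs_def]
  by (simp_all add: eta_contract_eq)

lemma J_compatible_mono_op: "J_compatible (mono_op i)"
  unfolding mono_op_def
  by (auto split: prod.split intro!: J_compatible_comp J_compatible_funpow J_compatible_basic_ops)

lemma J_compatible_B_space:
  assumes "D \<in> B_space"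
  shows "J_compatible D"
proof -
  obtain I V where I: "finite I" "\<And>i. i \<in> I \<Longrightarrow> J_multiplier (V i)"
    and D: "D = (\<lambda>f z. \<Sum>i\<in>I. V i z * mono_op i f z)"
    using assms J_multiplier_A_space unfolding B_space_def by blast
  have "J_compatible (\<lambda>g z. V i z * mono_op i g z)" if "i \<in> I" for i
    using I(2)[OF that] J_compatible_mono_op[of i]
    unfolding J_compatible_def J_multiplier_def
    by (auto intro: J_repr_comp[of "\<lambda>g. J (\<lambda>z. V i z * g z)"])
  hence jr: "J_repr (\<lambda>g \<tau> x. \<Sum>i\<in>I. J (\<lambda>z. V i z * mono_op i g z) \<tau> x)"
    and tf: "\<And>g i. test_fun g \<Longrightarrow> i \<in> I \<Longrightarrow> test_fun (\<lambda>z. V i z * mono_op i g z)"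
    unfolding J_compatible_def by (auto intro: J_repr_sum[OF I(1)])
  have "J (\<lambda>z. \<Sum>i\<in>I. V i z * mono_op i g z) \<tau> x = (\<Sum>i\<in>I. J (\<lambda>z. V i z * mono_op i g z) \<tau> x)"
    if "test_fun g" for g \<tau> x
    using J_sum[OF I(1), of "\<lambda>i z. V i z * mono_op i g z"] tf[OF that] by simp
  hence "J_repr (\<lambda>g. J (D g))"
    unfolding D by (intro J_repr_cong[OF jr]) simp
  moreover have "test_fun (D g)" if "test_fun g" for g
    unfolding D using test_fun_sum[OF I(1)] tf[OF that] by simp
  ultimately show ?thesis unfolding J_compatible_def by blast
qed

section \<open>Continuity in \<open>\<tau>\<close>\<close>

lemma eq_if_isCont_off_half_ints:
  fixes f h :: "complex \<Rightarrow> complex"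
  assumes "isCont f \<tau>" "isCont h \<tau>" "\<And>t. t \<notin> half_ints \<Longrightarrow> f t = h t"
  shows "f \<tau> = h \<tau>"
proof (cases "\<tau> \<in> half_ints")
  case True
  define s where "s n = \<tau> + \<i> * of_real (inverse (real (Suc n)))" for n
  have "s \<longlonglongrightarrow> \<tau> + \<i> * of_real 0"
    unfolding s_def by (intro tendsto_intros LIMSEQ_inverse_real_of_nat)
  hence s: "s \<longlonglongrightarrow> \<tau>" by simp
  have "s n \<notin> half_ints" for n
    using Im_half_ints[of "s n"] Im_half_ints[OF True] by (auto simp: s_def)
  hence "(\<lambda>n. f (s n)) = (\<lambda>n. h (s n))" using assms(3) by simp
  thus ?thesis
    using isCont_tendsto_compose[OF assms(1) s] isCont_tendsto_compose[OF assms(2) s]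
    by (metis LIMSEQ_unique)
qed (use assms(3) in blast)

lemma isCont_J_xderiv_shift:
  assumes "test_fun g"
  shows "isCont (\<lambda>\<tau>. xderiv q (J g (\<tau> + of_int r)) x) \<tau>"
proof -
  have "isCont (\<lambda>\<sigma>. xderiv q (J g \<sigma>) x) (\<tau> + of_int r)"
    using continuous_on_J_xderiv[OF assms] by (simp add: continuous_on_eq_continuous_at)
  thus ?thesis by (rule isCont_o2[rotated]) simp
qed

lemma isCont_Dprime_apply_J:
  assumes "test_fun g" "\<forall>k\<in>S. \<tau> \<notin> poles (U k)"
  shows "isCont (\<lambda>\<tau>. Dprime_apply S U (J g) \<tau> x) \<tau>"
  unfolding Dprime_apply_def
proof (intro continuous_sum)
  fix k assume "k \<in> S"
  hence "poly (snd (U k)) \<tau> \<noteq> 0" using assms(2) by (auto simp: poles_def)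
  hence "isCont (ratval (U k)) \<tau>"
    unfolding ratval_def by (intro continuous_intros)
  thus "isCont (\<lambda>\<tau>. case k of (p, q, r) \<Rightarrow>
      ratval (U (p, q, r)) \<tau> * of_real x ^ p * xderiv q (\<lambda>y. J g (\<tau> + of_int r) y) x) \<tau>"
    by (cases k) (auto intro!: continuous_intros isCont_J_xderiv_shift[OF assms(1)] simp: eta_contract_eq)
qed

lemma J_eq_Dprime_apply_at_non_pole:
  assumes "test_fun f" "test_fun (D f)" "\<forall>k\<in>S. \<tau> \<notin> poles (U k)"
    and "\<And>t. t \<notin> half_ints \<Longrightarrow> J (D f) t x = Dprime_apply S U (J f) t x"
  shows "J (D f) \<tau> x = Dprime_apply S U (J f) \<tau> x"
proof (rule eq_if_isCont_off_half_ints[where f = "\<lambda>\<tau>. J (D f) \<tau> x"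
      and h = "\<lambda>\<tau>. Dprime_apply S U (J f) \<tau> x"])
  show "isCont (\<lambda>\<tau>. J (D f) \<tau> x) \<tau>"
    using isCont_J_xderiv_shift[OF assms(2), where q = 0 and r = 0] by (simp add: xderiv_def)
  show "isCont (\<lambda>\<tau>. Dprime_apply S U (J f) \<tau> x) \<tau>"
    using assms(1,3) by (rule isCont_Dprime_apply_J)
qed (rule assms(4))

theorem theorem3:
  assumes "D \<in> B_space"
  shows "\<exists>S U. finite S \<and>
     (\<forall>i\<in>S. reduced_ratfun (U i) \<and> poles (U i) \<subseteq> half_ints) \<and>
     (\<forall>f \<tau> x. test_fun f \<longrightarrow> (\<forall>i\<in>S. \<tau> \<notin> poles (U i)) \<longrightarrow>
        J (D f) \<tau> x = Dprime_apply S U (J f) \<tau> x)"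
proof -
  have D: "J_compatible D" using assms by (rule J_compatible_B_space)
  then obtain L where L: "rat_sdop L"
    "\<And>g \<tau> x. test_fun g \<Longrightarrow> \<tau> \<notin> half_ints \<Longrightarrow> J (D g) \<tau> x = sdop_apply L (J g) \<tau> x"
    unfolding J_compatible_def J_repr_def by blast
  obtain S U where S: "finite S" "\<And>k. k \<in> S \<Longrightarrow> reduced_ratfun (U k) \<and> poles (U k) \<subseteq> half_ints"
    "\<And>\<Phi> \<tau> x. \<tau> \<notin> half_ints \<Longrightarrow> sdop_apply L \<Phi> \<tau> x = Dprime_apply S U \<Phi> \<tau> x"
    using sdop_as_Dprime[OF L(1)] by blast
  have "J (D f) \<tau> x = Dprime_apply S U (J f) \<tau> x"
    if f: "test_fun f" and \<tau>: "\<forall>k\<in>S. \<tau> \<notin> poles (U k)" for f \<tau> x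
  proof (rule J_eq_Dprime_apply_at_non_pole[where D = D, OF f _ \<tau>])
    show "test_fun (D f)" using D f by (simp add: J_compatible_def)
    show "J (D f) t x = Dprime_apply S U (J f) t x" if "t \<notin> half_ints" for t
      using L(2)[OF f that] S(3)[OF that] by simp
  qed
  thus ?thesis
    using S(1,2) by (intro exI[of _ S] exI[of _ U]) blast
qed

end
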